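(* Let $n\geq 1$ and $i\in[n-1]$. Then \[\Lambda(n,i)+\Lambda(n,i+1)= L_2(n,i),\] except when $n$ is even and $n+i\equiv 2\pmod 4$, in which case \[\Lambda(n,i)+\Lambda(n,i+1)= L_2(n,i)+L_2\Big(\frac n2,\frac i2\Big).\]
   Context: $\mathcal C_n^{+-}$ is the set of cyclic permutations $\pi=\pi_1\cdots\pi_n$ of $[n]$ (those consisting of a single $n$-cycle) that are unimodal, i.e. for which there is $e\in\{0,\dots,n\}$ with $\pi_1\cdots\pi_e$ increasing and $\pi_{e+1}\cdots\pi_n$ decreasing. $\Lambda(n,i)$ is the number of $\pi\in\mathcal C_n^{+-}$ with $\pi_i=n$ (peak at position $i$). $L_2(m,j)$ is the number of primitive binary necklaces (binary Lyndon words) of length $m$ with exactly $j$ ones, where a word is primitive if it is not of the form $q^r$ with $r>1$. *)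

theory Defs
  imports "HOL-Combinatorics.Permutations"
begin

definition cyclic_perm :: "nat \<Rightarrow> (nat \<Rightarrow> nat) \<Rightarrow> bool" where
  "cyclic_perm n \<pi> \<longleftrightarrow> \<pi> permutes {1..n} \<and>
     (\<forall>x\<in>{1..n}. \<exists>k. (\<pi> ^^ k) 1 = x)"

definition unimodal :: "nat \<Rightarrow> (nat \<Rightarrow> nat) \<Rightarrow> bool" where
  "unimodal n \<pi> \<longleftrightarrow> (\<exists>e\<le>n.
     (\<forall>a b. 1 \<le> a \<and> a < b \<and> b \<le> e \<longrightarrow> \<pi> a < \<pi> b) \<and>
     (\<forall>a b. e + 1 \<le> a \<and> a < b \<and> b \<le> n \<longrightarrow> \<pi> a > \<pi> b))"

definition Lambda :: "nat \<Rightarrow> nat \<Rightarrow> nat" where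
  "Lambda n i = card {\<pi>. cyclic_perm n \<pi> \<and> unimodal n \<pi> \<and> \<pi> i = n}"

definition primitive_word :: "'a list \<Rightarrow> bool" where
  "primitive_word w \<longleftrightarrow> \<not> (\<exists>q r. r > 1 \<and> w = concat (replicate r q))"

definition necklace :: "'a list \<Rightarrow> 'a list set" where
  "necklace w = {rotate k w | k. True}"

definition L2 :: "nat \<Rightarrow> nat \<Rightarrow> nat" where
  "L2 m j = card (necklace ` {w :: bool list. length w = m \<and> count_list w True = j \<and> primitive_word w})"

end

theory Submission
  imports Defs "HOL-Combinatorics.Cycles"
begin

text \<open>The permutations counted by \<open>Lambda n i + Lambda n (i + 1)\<close> are exactly the cyclic
  permutations \<open>f\<close> of \<open>{1..n}\<close> that increase on \<open>{1..i}\<close> and decrease on \<open>{i+1..n}\<close>. The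
  itinerary of a point \<open>x\<close> records for \<open>j < n\<close> whether \<open>f^j(x) \<le> i\<close>. As \<open>f\<close> preserves order on
  the first part and reverses it on the second, \<open>x < y\<close> implies that the itinerary of \<open>x\<close> is at
  most that of \<open>y\<close> in an alternating lexicographic order. The itineraries are the rotations of
  that of \<open>1\<close>, each shared by equally many points, so the order determines the itinerary of every
  point, and monotonicity on each fibre then determines \<open>f\<close>: the permutation is determined by
  the necklace of the itinerary of \<open>1\<close>. If this word has period \<open>p < n\<close>, then \<open>f^p\<close> maps the
  fibre of \<open>1\<close> monotonically or antitonically to itself; since \<open>f\<close> is an \<open>n\<close>-cycle it is an
  antitone involution there, whence \<open>n = 2p\<close> and a period contains an odd number of zeros. So
  the word is primitive with \<open>i\<close> ones, or the square of a primitive word with an odd number of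
  zeros, which forces \<open>n\<close> even and \<open>n + i \<equiv> 2 (mod 4)\<close>. Conversely each such necklace is
  realised by numbering the points by the rank of their itinerary.\<close>

section \<open>The alternating lexicographic order\<close>

fun false_count :: "(nat \<Rightarrow> bool) \<Rightarrow> nat \<Rightarrow> nat" where
  "false_count f 0 = 0"
| "false_count f (Suc k) = false_count f k + (if f k then 0 else 1)"

lemma false_count_cong: "(\<And>j. j < k \<Longrightarrow> f j = g j) \<Longrightarrow> false_count f k = false_count g k"
  by (induction k) auto

lemma false_count_Suc_shift:
  "false_count f (Suc k) = (if f 0 then 0 else 1) + false_count (\<lambda>j. f (Suc j)) k"
  by (induction k) auto

lemma false_count_nth: "k \<le> length a \<Longrightarrow> false_count ((!) a) k = count_list (take k a) False"
  by (induction k) (auto simp: take_Suc_conv_app_nth)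

text \<open>Words are compared at their first difference; there \<open>True\<close> is smaller than \<open>False\<close>
  if an even number of letters \<open>False\<close> precede it, and larger otherwise. This is how itineraries
  of a map that increases on the \<open>True\<close> part and decreases on the \<open>False\<close> part are ordered.\<close>

definition alt_less :: "bool list \<Rightarrow> bool list \<Rightarrow> bool" where
  "alt_less a b \<longleftrightarrow> length a = length b \<and>
     (\<exists>k<length a. (\<forall>j<k. a!j = b!j) \<and> a!k \<noteq> b!k \<and> a!k = even (false_count ((!) a) k))"

lemma alt_less_irrefl: "\<not> alt_less a a"
  by (auto simp: alt_less_def)

lemma alt_less_asym: assumes "alt_less a b" shows "\<not> alt_less b a"
proof
  assume "alt_less b a"
  from assms obtain k1 where k1: "k1 < length a" "\<forall>j<k1. a!j = b!j" "a!k1 \<noteq> b!k1"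
      "a!k1 = even (false_count ((!) a) k1)" unfolding alt_less_def by blast
  from \<open>alt_less b a\<close> obtain k2 where k2: "\<forall>j<k2. b!j = a!j" "b!k2 \<noteq> a!k2"
      "b!k2 = even (false_count ((!) b) k2)" unfolding alt_less_def by blast
  have "k1 = k2" using k1 k2 by (metis linorder_neqE_nat)
  moreover have "false_count ((!) a) k1 = false_count ((!) b) k1"
    using k1 by (intro false_count_cong) auto
  ultimately show False using k1 k2 by auto
qed

lemma alt_less_trans: assumes "alt_less a b" "alt_less b c" shows "alt_less a c"
proof -
  from assms(1) obtain k1 where k1: "k1 < length a" "\<forall>j<k1. a!j = b!j" "a!k1 \<noteq> b!k1"
      "a!k1 = even (false_count ((!) a) k1)" and l1: "length a = length b"
    unfolding alt_less_def by blast
  from assms(2) obtain k2 where k2: "k2 < length b" "\<forall>j<k2. b!j = c!j" "b!k2 \<noteq> c!k2"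
      "b!k2 = even (false_count ((!) b) k2)" and l2: "length b = length c"
    unfolding alt_less_def by blast
  have same_count: "false_count ((!) a) k = false_count ((!) b) k" if "k \<le> k1" for k
    using k1 that by (intro false_count_cong) auto
  consider "k1 < k2" | "k2 < k1" | "k1 = k2" by linarith
  then show ?thesis
  proof cases
    case 1
    then show ?thesis using k1 k2 l1 l2 unfolding alt_less_def
      by (intro conjI exI[of _ k1]) auto
  next
    case 2
    then show ?thesis using k1 k2 l1 l2 same_count[of k2] unfolding alt_less_def
      by (intro conjI exI[of _ k2]) auto
  next
    case 3
    then show ?thesis using k1 k2 same_count[of k1] by auto
  qed
qed

lemma first_difference:
  assumes "length a = length b" "a \<noteq> b"
  obtains k where "k < length a" "\<forall>j<k. a!j = b!j" "a!k \<noteq> b!k"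
proof -
  have ex: "\<exists>k. k < length a \<and> a!k \<noteq> b!k" using assms nth_equalityI by blast
  define k where "k = (LEAST k. k < length a \<and> a!k \<noteq> b!k)"
  have "k < length a \<and> a!k \<noteq> b!k" unfolding k_def by (rule LeastI_ex) (fact ex)
  moreover have "a!j = b!j" if "j < k" for j
    using not_less_Least[of j "\<lambda>k. k < length a \<and> a!k \<noteq> b!k"] that calculation
    unfolding k_def by auto
  ultimately show ?thesis using that by blast
qed

lemma alt_less_linear:
  assumes "length a = length b" "a \<noteq> b"
  shows "alt_less a b \<or> alt_less b a"
proof -
  obtain k where k: "k < length a" "\<forall>j<k. a!j = b!j" "a!k \<noteq> b!k"
    using first_difference[OF assms] .
  have "false_count ((!) a) k = false_count ((!) b) k" using k by (intro false_count_cong) auto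
  then show ?thesis using k assms(1) unfolding alt_less_def
    by (cases "a!k = even (false_count ((!) a) k)") (auto intro!: exI[of _ k])
qed

section \<open>Monotone maps and initial segments of finite orders\<close>

lemma card_less_image_strict_mono_on:
  fixes g :: "'a::linorder \<Rightarrow> 'b::linorder"
  assumes bij: "bij_betw g F F'" and mono: "strict_mono_on F g" and x: "x \<in> F"
  shows "card {z\<in>F'. z < g x} = card {y\<in>F. y < x}"
proof -
  have "g ` {y\<in>F. y < x} = {z\<in>F'. z < g x}"
  proof
    show "g ` {y \<in> F. y < x} \<subseteq> {z \<in> F'. z < g x}"
      using bij x strict_mono_onD[OF mono] by (auto simp: bij_betw_def)
    show "{z \<in> F'. z < g x} \<subseteq> g ` {y \<in> F. y < x}"
    proof
      fix z assume z: "z \<in> {z \<in> F'. z < g x}"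
      then obtain y where y: "y \<in> F" "z = g y" using bij by (auto simp: bij_betw_def)
      have "\<not> x < y"
      proof
        assume "x < y"
        then have "g x < g y" by (rule strict_mono_onD[OF mono x y(1)])
        then show False using y z by (metis less_asym mem_Collect_eq)
      qed
      moreover have "x \<noteq> y" using y z by auto
      ultimately have "y < x" by (auto simp: not_less le_less)
      then show "z \<in> g ` {y \<in> F. y < x}" using y by auto
    qed
  qed
  moreover have "inj_on g {y\<in>F. y < x}" using bij by (auto simp: bij_betw_def inj_on_def)
  ultimately show ?thesis by (metis card_image)
qed

lemma card_greater_image_strict_antimono_on:
  fixes g :: "'a::linorder \<Rightarrow> 'b::linorder"
  assumes bij: "bij_betw g F F'" and anti: "strict_antimono_on F g" and x: "x \<in> F"
  shows "card {z\<in>F'. g x < z} = card {y\<in>F. y < x}"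
proof -
  have dec: "g y < g z" if "y \<in> F" "z \<in> F" "z < y" for y z
    using monotone_onD[OF anti] that by blast
  have "g ` {y\<in>F. y < x} = {z\<in>F'. g x < z}"
  proof
    show "g ` {y \<in> F. y < x} \<subseteq> {z \<in> F'. g x < z}"
      using bij x dec by (auto simp: bij_betw_def)
    show "{z \<in> F'. g x < z} \<subseteq> g ` {y \<in> F. y < x}"
    proof
      fix z assume z: "z \<in> {z \<in> F'. g x < z}"
      then obtain y where y: "y \<in> F" "z = g y" using bij by (auto simp: bij_betw_def)
      have "\<not> x < y"
      proof
        assume "x < y"
        then have "g y < g x" by (rule dec[OF y(1) x])
        then show False using y z by (metis less_asym mem_Collect_eq)
      qed
      moreover have "x \<noteq> y" using y z by auto
      ultimately have "y < x" by (auto simp: not_less le_less)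
      then show "z \<in> g ` {y \<in> F. y < x}" using y by auto
    qed
  qed
  moreover have "inj_on g {y\<in>F. y < x}" using bij by (auto simp: bij_betw_def inj_on_def)
  ultimately show ?thesis by (metis card_image)
qed

lemma eq_if_card_less_eq:
  fixes a b :: "'a::linorder"
  assumes "finite F" "a \<in> F" "b \<in> F" "card {z\<in>F. z < a} = card {z\<in>F. z < b}"
  shows "a = b"
proof (rule ccontr)
  assume "a \<noteq> b"
  then consider "a < b" | "b < a" by fastforce
  then show False
  proof cases
    case 1
    then have "{z\<in>F. z < a} \<subset> {z\<in>F. z < b}" using assms(2) by auto
    from psubset_card_mono[OF _ this] assms(1,4) show False by simp
  next
    case 2
    then have "{z\<in>F. z < b} \<subset> {z\<in>F. z < a}" using assms(3) by auto
    from psubset_card_mono[OF _ this] assms(1,4) show False by simp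
  qed
qed

lemma eq_if_card_greater_eq:
  fixes a b :: "'a::linorder"
  assumes "finite F" "a \<in> F" "b \<in> F" "card {z\<in>F. a < z} = card {z\<in>F. b < z}"
  shows "a = b"
proof (rule ccontr)
  assume "a \<noteq> b"
  then consider "a < b" | "b < a" by fastforce
  then show False
  proof cases
    case 1
    then have "{z\<in>F. b < z} \<subset> {z\<in>F. a < z}" using assms(3) by auto
    from psubset_card_mono[OF _ this] assms(1,4) show False by simp
  next
    case 2
    then have "{z\<in>F. a < z} \<subset> {z\<in>F. b < z}" using assms(2) by auto
    from psubset_card_mono[OF _ this] assms(1,4) show False by simp
  qed
qed

lemma bij_betw_strict_mono_on_unique:
  fixes f g :: "'a::linorder \<Rightarrow> 'b::linorder"
  assumes "finite F'" "bij_betw f F F'" "bij_betw g F F'"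
    and "strict_mono_on F f" "strict_mono_on F g" and x: "x \<in> F"
  shows "f x = g x"
proof (rule eq_if_card_less_eq[OF assms(1)])
  show "f x \<in> F'" "g x \<in> F'" using assms by (auto simp: bij_betw_def)
  show "card {z \<in> F'. z < f x} = card {z \<in> F'. z < g x}"
    using card_less_image_strict_mono_on[OF assms(2,4) x] card_less_image_strict_mono_on[OF assms(3,5) x]
    by simp
qed

lemma bij_betw_strict_antimono_on_unique:
  fixes f g :: "'a::linorder \<Rightarrow> 'b::linorder"
  assumes "finite F'" "bij_betw f F F'" "bij_betw g F F'"
    and "strict_antimono_on F f" "strict_antimono_on F g" and x: "x \<in> F"
  shows "f x = g x"
proof (rule eq_if_card_greater_eq[OF assms(1)])
  show "f x \<in> F'" "g x \<in> F'" using assms by (auto simp: bij_betw_def)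
  show "card {z \<in> F'. f x < z} = card {z \<in> F'. g x < z}"
    using card_greater_image_strict_antimono_on[OF assms(2,4) x]
      card_greater_image_strict_antimono_on[OF assms(3,5) x] by simp
qed

lemma strict_mono_on_endo_eq_id:
  fixes g :: "'a::linorder \<Rightarrow> 'a"
  assumes "finite F" "g ` F \<subseteq> F" "strict_mono_on F g" "x \<in> F"
  shows "g x = x"
proof -
  have "bij_betw g F F"
    using endo_inj_surj[OF assms(1,2) strict_mono_on_imp_inj_on[OF assms(3)]]
      strict_mono_on_imp_inj_on[OF assms(3)] by (simp add: bij_betw_def)
  moreover have "strict_mono_on F id" by (simp add: strict_mono_onI)
  ultimately show ?thesis
    using bij_betw_strict_mono_on_unique[OF assms(1) _ bij_betw_id assms(3) _ assms(4)] by simp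
qed

lemma strict_antimono_on_endo_involution:
  fixes g :: "'a::linorder \<Rightarrow> 'a"
  assumes "finite F" "g ` F \<subseteq> F" "strict_antimono_on F g" "x \<in> F"
  shows "g (g x) = x"
proof -
  have "strict_mono_on F (g \<circ> g)"
    using assms(2,3) by (intro strict_mono_onI) (auto simp: monotone_on_def image_subset_iff)
  moreover have "(g \<circ> g) ` F \<subseteq> F" using assms(2) by (auto simp: image_subset_iff)
  ultimately have "(g \<circ> g) x = x" using strict_mono_on_endo_eq_id assms(1,4) by blast
  then show ?thesis by simp
qed

lemma downward_closed_eq_atLeastAtMost:
  fixes D :: "nat set"
  assumes sub: "D \<subseteq> {1..n}"
    and down: "\<And>y z. y \<in> {1..n} \<Longrightarrow> z \<in> D \<Longrightarrow> y \<le> z \<Longrightarrow> y \<in> D"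
  shows "D = {1..card D}"
proof (cases "D = {}")
  case False
  have fin: "finite D" using sub finite_subset by blast
  have "D = {1..Max D}"
  proof
    show "D \<subseteq> {1..Max D}" using sub fin by auto
    show "{1..Max D} \<subseteq> D"
    proof
      fix y assume "y \<in> {1..Max D}"
      moreover have "Max D \<in> D" using Max_in[OF fin False] .
      ultimately show "y \<in> D" using down[of y "Max D"] sub by auto
    qed
  qed
  moreover from this have "card D = Max D" by (metis card_atLeastAtMost diff_Suc_1)
  ultimately show ?thesis by simp
qed simp

section \<open>Rotations, primitive words and necklaces\<close>

lemma count_list_conv_card: "count_list xs y = card {j. j < length xs \<and> xs!j = y}"
proof -
  have "count_list xs y = card {j. j < length xs \<and> y = xs!j}"
    by (simp add: count_list_eq_length_filter length_filter_conv_card)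
  also have "{j. j < length xs \<and> y = xs!j} = {j. j < length xs \<and> xs!j = y}" by auto
  finally show ?thesis .
qed

lemma count_list_True_False: "count_list w True + count_list w False = length w"
  by (induction w) auto

lemma count_list_rotate: "count_list (rotate k xs) x = count_list xs x"
proof -
  have "count_list (rotate1 xs) x = count_list xs x" for xs by (cases xs) auto
  then show ?thesis by (induction k) auto
qed

lemma rotate_mult_period: "rotate k w = w \<Longrightarrow> rotate (k * q) w = w"
proof (induction q)
  case (Suc q)
  have "rotate (k * Suc q) w = rotate k (rotate (k * q) w)" by (simp add: rotate_rotate add.commute)
  then show ?case using Suc by simp
qed simp

lemma rotate_mod_period:
  assumes "rotate d w = w" shows "rotate k w = rotate (k mod d) w"
proof -
  have "k = k mod d + d * (k div d)" by simp
  then have "rotate k w = rotate (k mod d) (rotate (d * (k div d)) w)" by (metis rotate_rotate)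
  then show ?thesis using rotate_mult_period[OF assms] by simp
qed

lemma rotate_gcd_period:
  assumes "rotate k w = w" "0 < k"
  shows "rotate (gcd k (length w)) w = w"
proof -
  obtain x y where xy: "k * x = length w * y + gcd k (length w)"
    using bezout_nat[of k "length w"] assms by auto
  have "w = rotate (k * x) w" using rotate_mult_period[OF assms(1)] by simp
  also have "\<dots> = rotate ((length w * y + gcd k (length w)) mod length w) w"
    using xy rotate_conv_mod[of "k * x" w] by simp
  also have "\<dots> = rotate (gcd k (length w)) w" by (simp add: rotate_conv_mod[symmetric])
  finally show ?thesis by simp
qed

lemma nth_mod_period:
  assumes "rotate d w = w" "0 < d" "j < length w"
  shows "w ! j = w ! (j mod d)"
  using assms(3)
proof (induction j rule: less_induct)
  case (less j)
  show ?case
  proof (cases "j < d")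
    case False
    have "w ! (j - d) = rotate d w ! (j - d)" using assms by simp
    also have "\<dots> = w ! j" using less.prems False by (simp add: nth_rotate)
    finally have "w ! j = w ! (j - d)" by simp
    also have "\<dots> = w ! ((j - d) mod d)" using less.IH[of "j - d"] False assms less.prems by auto
    also have "(j - d) mod d = j mod d" using False by (simp add: le_mod_geq)
    finally show ?thesis .
  qed simp
qed

lemma nth_concat_replicate:
  "j < r * length q \<Longrightarrow> concat (replicate r q) ! j = q ! (j mod length q)"
proof (induction r arbitrary: j)
  case (Suc r)
  show ?case
  proof (cases "j < length q")
    case False
    then have "concat (replicate (Suc r) q) ! j = concat (replicate r q) ! (j - length q)"
      by (simp add: nth_append)
    also have "\<dots> = q ! ((j - length q) mod length q)" using Suc False by auto
    also have "(j - length q) mod length q = j mod length q" using False by (simp add: le_mod_geq)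
    finally show ?thesis .
  qed (simp add: nth_append)
qed simp

lemma concat_replicate_take_period:
  assumes "rotate d w = w" "0 < d" "d dvd length w"
  shows "w = concat (replicate (length w div d) (take d w))"
proof (rule nth_equalityI)
  show "length w = length (concat (replicate (length w div d) (take d w)))"
  proof (cases "w = []")
    case False
    then have "d \<le> length w" using assms by (intro dvd_imp_le) auto
    then show ?thesis using assms by (simp add: length_concat sum_list_replicate min_def)
  qed simp
  fix j assume j: "j < length w"
  have "d \<le> length w" using j assms by (intro dvd_imp_le) auto
  then have "concat (replicate (length w div d) (take d w)) ! j = take d w ! (j mod d)"
    using nth_concat_replicate[of j "length w div d" "take d w"] j assms by simp
  then show "w ! j = concat (replicate (length w div d) (take d w)) ! j"
    using nth_mod_period[OF assms(1,2) j] assms(2) by simp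
qed

lemma rotate_concat_replicate: "rotate (length q) (concat (replicate r q)) = concat (replicate r q)"
proof (cases r)
  case (Suc r')
  then have "rotate (length q) (concat (replicate r q)) = concat (replicate r' q) @ q"
    by (simp add: rotate_append)
  also have "\<dots> = concat (replicate r q)" using Suc by (simp add: replicate_append_same[symmetric])
  finally show ?thesis .
qed simp

lemma not_primitive_word_rotate_fixed:
  assumes "\<not> primitive_word w" "w \<noteq> []"
  obtains k where "0 < k" "k < length w" "rotate k w = w"
proof -
  obtain q r where qr: "r > 1" "w = concat (replicate r q)"
    using assms unfolding primitive_word_def by blast
  have lw: "length w = r * length q" using qr by (simp add: length_concat sum_list_replicate)
  then have "length q > 0" using assms by (cases "length q") auto
  then have "length q < length w" using lw qr(1) by simp
  then show ?thesis
    using that[of "length q"] \<open>length q > 0\<close> qr(2) rotate_concat_replicate by blast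
qed

lemma primitive_word_rotate_neq:
  assumes "primitive_word w" "0 < k" "k < length w"
  shows "rotate k w \<noteq> w"
proof
  assume "rotate k w = w"
  define d where "d = gcd k (length w)"
  have d: "rotate d w = w" "0 < d"
    using rotate_gcd_period[OF \<open>rotate k w = w\<close>] assms unfolding d_def by auto
  have "d < length w" using gcd_le1_nat[of k "length w"] assms unfolding d_def by linarith
  obtain c where c: "length w = d * c" unfolding d_def by (metis gcd_dvd2 dvdE)
  with \<open>d < length w\<close> have "c \<noteq> 0" "c \<noteq> 1" by auto
  moreover have "length w div d = c" using c d(2) by simp
  ultimately have "length w div d > 1" by linarith
  moreover have "w = concat (replicate (length w div d) (take d w))"
    by (rule concat_replicate_take_period[OF d]) (simp add: c)
  ultimately show False using assms(1) unfolding primitive_word_def by blast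
qed

lemma primitive_word_rotate_inj:
  assumes "primitive_word w" "a < length w" "b < length w" "rotate a w = rotate b w"
  shows "a = b"
proof (rule ccontr)
  have shift: "rotate (b - a) w = w" if ab: "a < b" "b < length w" "rotate a w = rotate b w" for a b
  proof -
    have "length w - a + b = (b - a) + length w" using ab by linarith
    then have "(length w - a + b) mod length w = ((b - a) + length w) mod length w" by (simp only:)
    also have "\<dots> = b - a" using ab by (simp only: mod_add_self2) simp
    finally have "(length w - a + b) mod length w = b - a" .
    then have "rotate (b - a) w = rotate (length w - a) (rotate b w)"
      by (simp add: rotate_rotate rotate_conv_mod[of "length w - a + b"])
    also have "\<dots> = rotate (length w - a) (rotate a w)" using ab by simp
    also have "\<dots> = w" using ab(1,2) by (simp add: rotate_rotate)
    finally show ?thesis .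
  qed
  assume "a \<noteq> b"
  then consider "a < b" | "b < a" by linarith
  then show False
  proof cases
    case 1
    then show False using shift[of a b] assms primitive_word_rotate_neq[OF assms(1), of "b - a"] by simp
  next
    case 2
    then show False using shift[of b a] assms primitive_word_rotate_neq[OF assms(1), of "a - b"] by simp
  qed
qed

lemma necklace_rotate: "necklace (rotate k w) = necklace w"
proof (cases "w = []")
  case False
  let ?l = "length w" and ?d = "length w - k mod length w"
  have "rotate ?d (rotate k w) = rotate (?d + k mod ?l) w"
    by (subst rotate_conv_mod[of k]) (simp add: rotate_rotate)
  moreover have "?d + k mod ?l = ?l" using False by simp
  ultimately have undo: "rotate ?d (rotate k w) = w" by simp
  have "rotate j w = rotate (j + ?d) (rotate k w)" for j
    using undo rotate_rotate[of j ?d "rotate k w"] by simp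
  then show ?thesis unfolding necklace_def by (auto simp: rotate_rotate)
qed (simp add: necklace_def)

lemma rotate_append_self:
  assumes "k < length u"
  shows "rotate k (u @ u) = rotate k u @ rotate k u"
proof -
  have "rotate k (u @ u) = drop k u @ u @ take k u" using assms by (simp add: rotate_drop_take)
  also have "\<dots> = (drop k u @ take k u) @ (drop k u @ take k u)"
    by (metis append_take_drop_id append.assoc)
  finally show ?thesis using assms by (simp add: rotate_drop_take)
qed

lemma necklace_append_self:
  assumes "u \<noteq> []" shows "necklace (u @ u) = (\<lambda>v. v @ v) ` necklace u"
proof -
  have uu: "rotate (length u) (u @ u) = u @ u" by (rule rotate_append)
  have "rotate k (u @ u) = rotate (k mod length u) u @ rotate (k mod length u) u" for k
    using rotate_mod_period[OF uu, of k] rotate_append_self[of "k mod length u" u] assms by simp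
  moreover have "rotate k u = rotate (k mod length u) u" for k by (rule rotate_conv_mod)
  ultimately show ?thesis unfolding necklace_def by auto
qed

lemma not_primitive_word_in_necklace_append_self:
  assumes "u \<noteq> []" "v \<in> necklace (u @ u)" shows "\<not> primitive_word v"
proof -
  obtain x where "v = x @ x" using necklace_append_self[OF assms(1)] assms(2) by auto
  then have "v = concat (replicate 2 x)" by (simp add: numeral_2_eq_2)
  moreover have "(2::nat) > 1" by simp
  ultimately show ?thesis unfolding primitive_word_def by blast
qed

section \<open>Itineraries of unimodal cyclic permutations\<close>

locale unimodal_cycle =
  fixes n e :: nat and f :: "nat \<Rightarrow> nat"
  assumes two_le_n: "2 \<le> n" and e_le_n: "e \<le> n" and permutes: "f permutes {1..n}"
    and cyclic: "\<forall>x\<in>{1..n}. \<exists>k. (f ^^ k) 1 = x"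
    and increasing: "\<And>a b. 1 \<le> a \<Longrightarrow> a < b \<Longrightarrow> b \<le> e \<Longrightarrow> f a < f b"
    and decreasing: "\<And>a b. e + 1 \<le> a \<Longrightarrow> a < b \<Longrightarrow> b \<le> n \<Longrightarrow> f b < f a"
begin

lemma f_in: "x \<in> {1..n} \<Longrightarrow> f x \<in> {1..n}"
  using permutes_in_image[OF permutes] by simp

lemma funpow_in: "x \<in> {1..n} \<Longrightarrow> (f ^^ k) x \<in> {1..n}"
  by (rule permutes_in_funpow_image[OF permutes])

lemma inj_f: "inj f"
  using permutes_inj[OF permutes] .

lemma one_in: "1 \<in> {1..n}"
  using two_le_n by simp

lemma permutation_f: "permutation f"
  using permutes permutation_permutes by blast

lemma least_power_one: "least_power f 1 = n"
proof -
  have "set (support f 1) = range (\<lambda>k. (f ^^ k) 1)" by (rule support_set[OF permutation_f])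
  also have "\<dots> = {1..n}" using cyclic funpow_in[OF one_in] by auto
  finally have "card (set (support f 1)) = n" by simp
  then show ?thesis using distinct_card[OF cycle_of_permutation[OF permutation_f, of 1]] by simp
qed

lemma funpow_n_one: "(f ^^ n) 1 = 1"
  using least_power_of_permutation(1)[OF permutation_f, of 1] least_power_one by simp

lemma funpow_one_neq: assumes "0 < k" "k < n" shows "(f ^^ k) 1 \<noteq> 1"
  using least_power_dvd[OF permutation_f, of 1 k] least_power_one assms
  by (auto dest: dvd_imp_le)

lemma funpow_n: assumes "x \<in> {1..n}" shows "(f ^^ n) x = x"
proof -
  obtain k where k: "(f ^^ k) 1 = x" using cyclic assms by blast
  have "(f ^^ n) ((f ^^ k) 1) = (f ^^ (n + k)) 1" by (simp add: funpow_add)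
  also have "\<dots> = (f ^^ (k + n)) 1" by (simp add: add.commute)
  also have "\<dots> = (f ^^ k) ((f ^^ n) 1)" by (simp add: funpow_add)
  finally have "(f ^^ n) ((f ^^ k) 1) = (f ^^ k) ((f ^^ n) 1)" .
  then show ?thesis using k funpow_n_one by simp
qed

lemma orbit_one: assumes "x \<in> {1..n}" obtains k where "k < n" "(f ^^ k) 1 = x"
proof -
  obtain k where "(f ^^ k) 1 = x" using cyclic assms by blast
  then show ?thesis using that[of "k mod n"] funpow_mod_eq[OF funpow_n_one, of k] two_le_n by simp
qed

lemma inj_on_orbit_one: "inj_on (\<lambda>k. (f ^^ k) 1) {..<n}"
  using cycle_of_permutation[OF permutation_f, of 1] least_power_one
  by (simp add: distinct_map atLeast0LessThan)

definition letter :: "nat \<Rightarrow> nat \<Rightarrow> bool" where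
  "letter x j \<longleftrightarrow> (f ^^ j) x \<le> e"

definition itin :: "nat \<Rightarrow> bool list" where
  "itin x = map (letter x) [0..<n]"

definition word :: "bool list" where
  "word = itin 1"

lemma letter_mod: assumes "x \<in> {1..n}" shows "letter x j = letter x (j mod n)"
  unfolding letter_def using funpow_mod_eq[OF funpow_n[OF assms]] by simp

lemma letter_funpow: "letter ((f ^^ k) x) j = letter x (j + k)"
  unfolding letter_def by (simp add: funpow_add)

lemma letter_0: "letter x 0 \<longleftrightarrow> x \<le> e"
  unfolding letter_def by simp

lemma length_itin [simp]: "length (itin x) = n"
  unfolding itin_def by simp

lemma nth_itin: "j < n \<Longrightarrow> itin x ! j = letter x j"
  unfolding itin_def by simp

lemma itin_funpow: assumes "x \<in> {1..n}" shows "itin ((f ^^ k) x) = rotate k (itin x)"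
proof (rule nth_equalityI)
  fix j assume "j < length (itin ((f ^^ k) x))"
  then have j: "j < n" by simp
  have "rotate k (itin x) ! j = letter x ((k + j) mod n)" using j by (simp add: nth_rotate nth_itin)
  also have "\<dots> = letter x (j + k)" using letter_mod[OF assms, of "k + j"] by (simp add: add.commute)
  finally show "itin ((f ^^ k) x) ! j = rotate k (itin x) ! j"
    using j by (simp add: nth_itin letter_funpow)
qed simp

lemma itin_f: "x \<in> {1..n} \<Longrightarrow> itin (f x) = rotate1 (itin x)"
  using itin_funpow[of x 1] by simp

lemma length_word [simp]: "length word = n"
  unfolding word_def by simp

lemma word_ne_Nil: "word \<noteq> []"
proof
  assume "word = []"
  then have "length word = 0" by simp
  then show False using two_le_n by simp
qed

lemma itin_image: "itin ` {1..n} = necklace word"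
proof
  show "itin ` {1..n} \<subseteq> necklace word"
  proof
    fix v assume "v \<in> itin ` {1..n}"
    then obtain x where x: "x \<in> {1..n}" "v = itin x" by blast
    then obtain k where "(f ^^ k) 1 = x" using orbit_one by blast
    then show "v \<in> necklace word"
      using x itin_funpow[OF one_in, of k] unfolding word_def necklace_def by auto
  qed
  show "necklace word \<subseteq> itin ` {1..n}"
  proof
    fix v assume "v \<in> necklace word"
    then obtain k where "v = rotate k word" unfolding necklace_def by auto
    then have "v = itin ((f ^^ k) 1)" using itin_funpow[OF one_in] unfolding word_def by simp
    then show "v \<in> itin ` {1..n}" using funpow_in[OF one_in] by blast
  qed
qed

lemma itin_in_necklace: "x \<in> {1..n} \<Longrightarrow> itin x \<in> necklace word"
  using itin_image by blast

lemma count_word_True: "count_list word True = e"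
proof -
  have "count_list word True = card {j. j < n \<and> (f ^^ j) 1 \<le> e}"
    unfolding count_list_conv_card length_word
    by (intro arg_cong[where f=card] Collect_cong) (auto simp: word_def nth_itin letter_def)
  also have "\<dots> = card ((\<lambda>j. (f ^^ j) 1) ` {j. j < n \<and> (f ^^ j) 1 \<le> e})"
    using inj_on_orbit_one by (intro card_image[symmetric]) (auto simp: inj_on_def)
  also have "(\<lambda>j. (f ^^ j) 1) ` {j. j < n \<and> (f ^^ j) 1 \<le> e} = {1..e}"
  proof
    show "(\<lambda>j. (f ^^ j) 1) ` {j. j < n \<and> (f ^^ j) 1 \<le> e} \<subseteq> {1..e}"
      using funpow_in[OF one_in] by auto
    show "{1..e} \<subseteq> (\<lambda>j. (f ^^ j) 1) ` {j. j < n \<and> (f ^^ j) 1 \<le> e}"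
    proof
      fix x assume x: "x \<in> {1..e}"
      then have "x \<in> {1..n}" using e_le_n by auto
      then obtain k where "k < n" "(f ^^ k) 1 = x" by (rule orbit_one)
      then show "x \<in> (\<lambda>j. (f ^^ j) 1) ` {j. j < n \<and> (f ^^ j) 1 \<le> e}" using x by auto
    qed
  qed
  finally show ?thesis by simp
qed

subsection \<open>Points are ordered like their itineraries\<close>

lemma f_order:
  assumes "a \<in> {1..n}" "b \<in> {1..n}" "a < b" "a \<le> e \<longleftrightarrow> b \<le> e"
  shows "if a \<le> e then f a < f b else f b < f a"
  using assms increasing[of a b] decreasing[of a b] by auto

lemma funpow_order:
  assumes x: "x \<in> {1..n}" and y: "y \<in> {1..n}" and "x < y"
    and agree: "\<forall>j<k. letter x j = letter y j"
  shows "if even (false_count (letter x) k) then (f ^^ k) x < (f ^^ k) y else (f ^^ k) y < (f ^^ k) x"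
  using agree
proof (induction k)
  case (Suc k)
  let ?a = "(f ^^ k) x" and ?b = "(f ^^ k) y"
  have IH: "if even (false_count (letter x) k) then ?a < ?b else ?b < ?a" using Suc by simp
  have same: "?a \<le> e \<longleftrightarrow> ?b \<le> e" using Suc.prems by (simp add: letter_def)
  have ab: "?a \<in> {1..n}" "?b \<in> {1..n}" using funpow_in x y by blast+
  have "false_count (letter x) (Suc k) = false_count (letter x) k + (if ?a \<le> e then 0 else 1)"
    by (simp add: letter_def)
  then show ?case
    using IH same f_order[OF ab _ same] f_order[OF ab(2,1) _ same[symmetric]] by (auto split: if_splits)
qed (use \<open>x < y\<close> in simp)

lemma letter_at_first_difference:
  assumes "x \<in> {1..n}" "y \<in> {1..n}" "x < y" "\<forall>j<k. letter x j = letter y j"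
    and "letter x k \<noteq> letter y k"
  shows "letter x k \<longleftrightarrow> even (false_count (letter x) k)"
  using funpow_order[OF assms(1-4)] assms(5) unfolding letter_def by (auto split: if_splits)

lemma alt_less_itin:
  assumes "x \<in> {1..n}" "y \<in> {1..n}" "x < y" "itin x \<noteq> itin y"
  shows "alt_less (itin x) (itin y)"
proof -
  obtain k where k: "k < n" "\<forall>j<k. itin x!j = itin y!j" "itin x!k \<noteq> itin y!k"
    using first_difference[of "itin x" "itin y"] assms by auto
  have agree: "\<forall>j<k. letter x j = letter y j" using k by (auto simp: nth_itin)
  have "false_count ((!) (itin x)) k = false_count (letter x) k"
    using k by (intro false_count_cong) (auto simp: nth_itin)
  then show ?thesis
    using letter_at_first_difference[OF assms(1-3) agree] k unfolding alt_less_def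
    by (intro conjI exI[of _ k]) (auto simp: nth_itin)
qed

lemma itin_le:
  assumes "x \<in> {1..n}" "y \<in> {1..n}" "x \<le> y"
  shows "itin x = itin y \<or> alt_less (itin x) (itin y)"
  using alt_less_itin[OF assms(1,2)] assms(3) by (cases "x = y") auto

definition fibre :: "bool list \<Rightarrow> nat set" where
  "fibre v = {y \<in> {1..n}. itin y = v}"

definition period :: nat where
  "period = (LEAST k. 0 < k \<and> rotate k word = word)"

lemma period: "0 < period" "period \<le> n" "rotate period word = word"
proof -
  have "0 < period \<and> rotate period word = word"
    unfolding period_def by (rule LeastI[of _ n]) (use two_le_n in auto)
  moreover have "period \<le> n" unfolding period_def by (rule Least_le) (use two_le_n in auto)
  ultimately show "0 < period" "period \<le> n" "rotate period word = word" by auto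
qed

lemma rotate_neq_word_below_period: "0 < k \<Longrightarrow> k < period \<Longrightarrow> rotate k word \<noteq> word"
  using not_less_Least[of k "\<lambda>k. 0 < k \<and> rotate k word = word"] unfolding period_def by auto

lemma funpow_period_fibre_word: "(f ^^ period) ` fibre word \<subseteq> fibre word"
  using itin_funpow period(3) funpow_in unfolding fibre_def by auto

text \<open>Points with the same itinerary make the same turns, so \<open>f ^^ period\<close> preserves or
  reverses their order according to the parity of the number of turns on the decreasing part.\<close>

lemma funpow_period_order:
  assumes "y \<in> fibre word" "z \<in> fibre word" "y < z"
  shows "if even (false_count (letter 1) period)
    then (f ^^ period) y < (f ^^ period) z else (f ^^ period) z < (f ^^ period) y"
proof -
  have same_letter: "letter v j = letter 1 j" if "v \<in> fibre word" "j < period" for v j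
    using that period(2) nth_itin[of j v] nth_itin[of j 1] unfolding fibre_def word_def by simp
  have "y \<in> {1..n}" "z \<in> {1..n}" using assms unfolding fibre_def by auto
  moreover have "false_count (letter y) period = false_count (letter 1) period"
    using same_letter[OF assms(1)] by (intro false_count_cong) auto
  ultimately show ?thesis using funpow_order[of y z period] same_letter assms by simp
qed

lemma one_in_fibre_word: "1 \<in> fibre word"
  unfolding fibre_def word_def using one_in by simp

lemma odd_false_count_period:
  assumes "period < n" shows "odd (false_count (letter 1) period)"
proof
  assume "even (false_count (letter 1) period)"
  then have "strict_mono_on (fibre word) (f ^^ period)"
    using funpow_period_order by (intro strict_mono_onI) auto
  moreover have "finite (fibre word)" unfolding fibre_def by simp
  ultimately have "(f ^^ period) 1 = 1"
    using strict_mono_on_endo_eq_id funpow_period_fibre_word one_in_fibre_word by blast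
  then show False using funpow_one_neq period(1) assms by blast
qed

lemma period_half: assumes "period < n" shows "n = 2 * period"
proof -
  have "strict_antimono_on (fibre word) (f ^^ period)"
    using funpow_period_order odd_false_count_period[OF assms] by (intro monotone_onI) auto
  moreover have "finite (fibre word)" unfolding fibre_def by simp
  ultimately have "(f ^^ period) ((f ^^ period) 1) = 1"
    using strict_antimono_on_endo_involution funpow_period_fibre_word one_in_fibre_word by blast
  then have "(f ^^ (period + period)) 1 = 1" by (simp add: funpow_add)
  then have "n \<le> period + period" using funpow_one_neq[of "period + period"] period(1) by linarith
  moreover have "rotate (n - period) word = word"
    using period(3) rotate_rotate[of "n - period" period word] assms by simp
  then have "period \<le> n - period" using rotate_neq_word_below_period[of "n - period"] assms by linarith
  ultimately show ?thesis by linarith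
qed

theorem word_primitive_or_square:
  "primitive_word word \<or>
   (\<exists>u. word = u @ u \<and> primitive_word u \<and> odd (count_list u False) \<and> 2 * length u = n)"
proof (cases "period = n")
  case True
  have "primitive_word word"
  proof (rule ccontr)
    assume "\<not> primitive_word word"
    then obtain k where "0 < k" "k < length word" "rotate k word = word"
      using word_ne_Nil by (rule not_primitive_word_rotate_fixed)
    then show False using rotate_neq_word_below_period True by simp
  qed
  then show ?thesis by simp
next
  case False
  then have less: "period < n" using period(2) by simp
  define u where "u = take period word"
  have split: "word = drop period word @ u"
    using period(3) less rotate_drop_take[of period word] unfolding u_def by simp
  have "u = take period (drop period word @ u)"
    unfolding u_def by (rule arg_cong[where f="take period", OF split[unfolded u_def]])
  also have "\<dots> = drop period word" using period_half[OF less] by simp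
  finally have word: "word = u @ u" using split by metis
  have "primitive_word u"
  proof (rule ccontr)
    assume "\<not> primitive_word u"
    moreover have "u \<noteq> []" using period(1) word_ne_Nil unfolding u_def by simp
    ultimately obtain k where k: "0 < k" "k < length u" "rotate k u = u"
      using not_primitive_word_rotate_fixed by blast
    then have "rotate k word = word" using word rotate_append_self[OF k(2)] by simp
    then show False using rotate_neq_word_below_period k less unfolding u_def by simp
  qed
  moreover have "false_count (letter 1) period = false_count ((!) word) period"
    using period(2) by (intro false_count_cong) (simp add: word_def nth_itin)
  then have "false_count (letter 1) period = count_list u False"
    using false_count_nth[of period word] period(2) unfolding u_def by simp
  ultimately show ?thesis
    using odd_false_count_period[OF less] word period_half[OF less] less unfolding u_def by auto
qed

end

context unimodal_cycle
begin

lemma image_f_fibre: "f ` fibre v = fibre (rotate1 v)"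
proof
  show "f ` fibre v \<subseteq> fibre (rotate1 v)" unfolding fibre_def using itin_f f_in by auto
  show "fibre (rotate1 v) \<subseteq> f ` fibre v"
  proof
    fix z assume z: "z \<in> fibre (rotate1 v)"
    then have "z \<in> f ` {1..n}" using permutes_image[OF permutes] unfolding fibre_def by simp
    then obtain y where y: "y \<in> {1..n}" "z = f y" by blast
    then have "rotate1 (itin y) = rotate1 v" using z itin_f unfolding fibre_def by simp
    then have "itin y = v" using inj_rotate1 by (auto dest: injD)
    then show "z \<in> f ` fibre v" using y unfolding fibre_def by blast
  qed
qed

lemma card_fibre_rotate: "card (fibre (rotate k v)) = card (fibre v)"
proof (induction k)
  case (Suc k)
  have "fibre (rotate (Suc k) v) = f ` fibre (rotate k v)" using image_f_fibre by simp
  moreover have "card (f ` fibre (rotate k v)) = card (fibre (rotate k v))"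
    using inj_f by (intro card_image) (simp add: inj_on_def inj_def)
  ultimately show ?case using Suc by simp
qed simp

definition fibre_size :: nat where
  "fibre_size = card (fibre word)"

lemma card_fibre: "v \<in> necklace word \<Longrightarrow> card (fibre v) = fibre_size"
  unfolding necklace_def fibre_size_def using card_fibre_rotate by auto

lemma card_itin_preimage:
  assumes "A \<subseteq> necklace word" shows "card {y \<in> {1..n}. itin y \<in> A} = card A * fibre_size"
proof -
  have fin: "finite A" using finite_subset[OF assms] itin_image by (metis finite_atLeastAtMost finite_imageI)
  have "{y \<in> {1..n}. itin y \<in> A} = (\<Union>v\<in>A. fibre v)" unfolding fibre_def by auto
  then have "card {y \<in> {1..n}. itin y \<in> A} = (\<Sum>v\<in>A. card (fibre v))"
    using fin by (simp add: card_UN_disjoint fibre_def disjoint_iff)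
  also have "\<dots> = card A * fibre_size" using card_fibre assms by (simp add: subset_iff)
  finally show ?thesis .
qed

lemma n_eq_card_necklace_mult: "n = card (necklace word) * fibre_size"
proof -
  have "{y \<in> {1..n}. itin y \<in> necklace word} = {1..n}" using itin_in_necklace by auto
  then show ?thesis using card_itin_preimage[of "necklace word"] by simp
qed

lemma fibre_size_eq_div: "fibre_size = n div card (necklace word)"
  using n_eq_card_necklace_mult two_le_n by (metis div_mult_self1_is_m gr0I mult_0 not_numeral_le_zero)

definition necklace_rank :: "bool list \<Rightarrow> nat" where
  "necklace_rank a = card {v \<in> necklace word. v = a \<or> alt_less v a}"

text \<open>The points are arranged in blocks of \<open>fibre_size\<close> consecutive numbers with equal
  itinerary, the blocks ordered like their itineraries. Hence the itinerary of every point is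
  determined by the necklace of \<open>word\<close> alone.\<close>

lemma itin_le_iff:
  assumes x: "x \<in> {1..n}" and a: "a \<in> necklace word"
  shows "itin x = a \<or> alt_less (itin x) a \<longleftrightarrow> x \<le> fibre_size * necklace_rank a"
proof -
  define A where "A = {v \<in> necklace word. v = a \<or> alt_less v a}"
  define D where "D = {y \<in> {1..n}. itin y \<in> A}"
  define c where "c = card D"
  have "D = {1..c}" unfolding c_def
  proof (rule downward_closed_eq_atLeastAtMost)
    show "D \<subseteq> {1..n}" unfolding D_def by auto
    fix y z assume yz: "y \<in> {1..n}" "z \<in> D" "y \<le> z"
    then have "itin y = itin z \<or> alt_less (itin y) (itin z)" using itin_le unfolding D_def by simp
    then show "y \<in> D"
      using yz itin_in_necklace alt_less_trans unfolding D_def A_def by auto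
  qed
  moreover have "c = fibre_size * necklace_rank a"
    using card_itin_preimage[of A] unfolding c_def D_def A_def necklace_rank_def
    by (simp add: mult.commute)
  moreover have "x \<in> D \<longleftrightarrow> itin x = a \<or> alt_less (itin x) a"
    using x itin_in_necklace unfolding D_def A_def by auto
  ultimately show ?thesis using x by auto
qed

lemma fibre_same_side: "y \<in> fibre v \<Longrightarrow> z \<in> fibre v \<Longrightarrow> y \<le> e \<longleftrightarrow> z \<le> e"
  using nth_itin[of 0 y] nth_itin[of 0 z] two_le_n unfolding fibre_def by (simp add: letter_0)

lemma strict_mono_on_fibre:
  assumes "x \<in> fibre v" "x \<le> e" shows "strict_mono_on (fibre v) f"
proof (rule strict_mono_onI)
  fix y z assume y: "y \<in> fibre v" and z: "z \<in> fibre v" and "y < z"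
  have "z \<le> e" using fibre_same_side[OF z assms(1)] assms(2) by simp
  moreover have "1 \<le> y" using y unfolding fibre_def by simp
  ultimately show "f y < f z" using increasing \<open>y < z\<close> by blast
qed

lemma strict_antimono_on_fibre:
  assumes "x \<in> fibre v" "\<not> x \<le> e" shows "strict_antimono_on (fibre v) f"
proof (rule monotone_onI)
  fix y z assume y: "y \<in> fibre v" and z: "z \<in> fibre v" and "y < z"
  have "e + 1 \<le> y" using fibre_same_side[OF y assms(1)] assms(2) by simp
  moreover have "z \<le> n" using z unfolding fibre_def by simp
  ultimately show "f z < f y" using decreasing \<open>y < z\<close> by blast
qed

end

section \<open>A unimodal cyclic permutation is determined by its necklace\<close>

lemma not_alt_less_itin_if_same_necklace:
  assumes F: "unimodal_cycle n e f" and G: "unimodal_cycle n e g"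
    and same: "necklace (unimodal_cycle.word n e f) = necklace (unimodal_cycle.word n e g)"
    and x: "x \<in> {1..n}"
  shows "\<not> alt_less (unimodal_cycle.itin n e f x) (unimodal_cycle.itin n e g x)"
proof -
  interpret A: unimodal_cycle n e f by (rule F)
  interpret B: unimodal_cycle n e g by (rule G)
  have sizes: "A.fibre_size = B.fibre_size" using A.fibre_size_eq_div B.fibre_size_eq_div same by simp
  have ranks: "A.necklace_rank = B.necklace_rank"
    unfolding A.necklace_rank_def B.necklace_rank_def same ..
  have a: "A.itin x \<in> necklace B.word" using A.itin_in_necklace x same by simp
  have "x \<le> A.fibre_size * A.necklace_rank (A.itin x)"
    using A.itin_le_iff[OF x A.itin_in_necklace[OF x]] by simp
  then have "x \<le> B.fibre_size * B.necklace_rank (A.itin x)" using sizes ranks by simp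
  then have "B.itin x = A.itin x \<or> alt_less (B.itin x) (A.itin x)" using B.itin_le_iff[OF x a] by simp
  then show ?thesis using alt_less_asym alt_less_irrefl by metis
qed

lemma itin_eq_if_same_necklace:
  assumes F: "unimodal_cycle n e f" and G: "unimodal_cycle n e g"
    and same: "necklace (unimodal_cycle.word n e f) = necklace (unimodal_cycle.word n e g)"
    and x: "x \<in> {1..n}"
  shows "unimodal_cycle.itin n e f x = unimodal_cycle.itin n e g x"
  using not_alt_less_itin_if_same_necklace[OF F G same x]
    not_alt_less_itin_if_same_necklace[OF G F same[symmetric] x]
    alt_less_linear unimodal_cycle.length_itin[OF F] unimodal_cycle.length_itin[OF G] by metis

lemma unimodal_cycle_eq_if_same_necklace:
  assumes F: "unimodal_cycle n e f" and G: "unimodal_cycle n e g"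
    and same: "necklace (unimodal_cycle.word n e f) = necklace (unimodal_cycle.word n e g)"
  shows "f = g"
proof
  interpret A: unimodal_cycle n e f by (rule F)
  interpret B: unimodal_cycle n e g by (rule G)
  fix x
  show "f x = g x"
  proof (cases "x \<in> {1..n}")
    case False
    then show ?thesis using permutes_not_in[OF A.permutes] permutes_not_in[OF B.permutes] by simp
  next
    case True
    have fibres: "A.fibre v = B.fibre v" for v
      using itin_eq_if_same_necklace[OF F G same] unfolding A.fibre_def B.fibre_def by auto
    let ?v = "A.itin x"
    have x: "x \<in> A.fibre ?v" and x': "x \<in> B.fibre ?v" using True fibres unfolding A.fibre_def by auto
    have fin: "finite (A.fibre (rotate1 ?v))" unfolding A.fibre_def by simp
    have bij_f: "bij_betw f (A.fibre ?v) (A.fibre (rotate1 ?v))"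
      using A.image_f_fibre inj_on_subset[OF A.inj_f subset_UNIV] by (simp add: bij_betw_def)
    have bij_g: "bij_betw g (A.fibre ?v) (A.fibre (rotate1 ?v))"
      using B.image_f_fibre inj_on_subset[OF B.inj_f subset_UNIV] fibres by (simp add: bij_betw_def)
    show ?thesis
    proof (cases "x \<le> e")
      case True
      then show ?thesis
        using bij_betw_strict_mono_on_unique[OF fin bij_f bij_g A.strict_mono_on_fibre[OF x True] _ x]
          B.strict_mono_on_fibre[OF x' True] fibres by simp
    next
      case False
      then show ?thesis
        using bij_betw_strict_antimono_on_unique[OF fin bij_f bij_g A.strict_antimono_on_fibre[OF x False] _ x]
          B.strict_antimono_on_fibre[OF x' False] fibres by simp
    qed
  qed
qed

section \<open>Every admissible necklace is the necklace of a unimodal cyclic permutation\<close>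

lemma mult_add_less_mult_add_iff:
  fixes a b t t' m :: nat
  assumes "t < m" "t' < m"
  shows "(m*a + t < m*b + t') = (a < b \<or> (a = b \<and> t < t'))"
proof (cases "a < b")
  case True
  have "m*a + t < m*a + m" using assms by simp
  also have "\<dots> = m * (a + 1)" by simp
  also have "\<dots> \<le> m * b" using True by (intro mult_le_mono2) simp
  finally show ?thesis using True by simp
next
  case False
  show ?thesis
  proof (cases "a = b")
    case True then show ?thesis by simp
  next
    case False2: False
    then have "b < a" using False by simp
    have "m*b + t' < m*b + m" using assms by simp
    also have "\<dots> = m * (b + 1)" by simp
    also have "\<dots> \<le> m * a" using \<open>b < a\<close> by (intro mult_le_mono2) simp
    finally show ?thesis using False False2 by simp
  qed
qed

lemma mult_add_eq_mult_add_imp: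
  fixes a b t t' m :: nat
  assumes "t < m" "t' < m" "m*a + t = m*b + t'"
  shows "a = b \<and> t = t'"
  using mult_add_less_mult_add_iff[OF assms(1,2), of a b] mult_add_less_mult_add_iff[OF assms(2,1), of b a]
    assms(3) by (metis less_irrefl linorder_neqE_nat)

text \<open>These are the words allowed by \<open>word_primitive_or_square\<close>: \<open>w0\<close> has exactly \<open>c\<close> distinct
  rotations, each to be the itinerary of \<open>m = n div c\<close> points.\<close>

locale admissible_word =
  fixes n c m :: nat and w0 :: "bool list"
  assumes length_w0: "length w0 = n" and two_le_n: "2 \<le> n"
    and n_eq: "n = m * c" and m_cases: "m = 1 \<or> m = 2"
    and rotate_c: "rotate c w0 = w0"
    and rotate_inj: "\<And>a b. a < c \<Longrightarrow> b < c \<Longrightarrow> rotate a w0 = rotate b w0 \<Longrightarrow> a = b"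
    and odd_falses: "m = 2 \<Longrightarrow> odd (count_list (take c w0) False)"
begin

lemma c_pos: "0 < c" using n_eq two_le_n by (cases c) auto
lemma m_pos: "0 < m" using m_cases by auto
lemma c_le_n: "c \<le> n" using n_eq m_pos by simp

definition rotations :: "bool list set" where
  "rotations = necklace w0"

lemma rotations_eq_image: "rotations = (\<lambda>k. rotate k w0) ` {..<c}"
proof
  show "rotations \<subseteq> (\<lambda>k. rotate k w0) ` {..<c}"
  proof
    fix v assume "v \<in> rotations"
    then obtain k where "v = rotate k w0" unfolding rotations_def necklace_def by auto
    then have "v = rotate (k mod c) w0" using rotate_mod_period[OF rotate_c] by simp
    moreover have "k mod c < c" using c_pos by simp
    ultimately show "v \<in> (\<lambda>k. rotate k w0) ` {..<c}" by blast
  qed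
  show "(\<lambda>k. rotate k w0) ` {..<c} \<subseteq> rotations" unfolding rotations_def necklace_def by auto
qed

lemma card_rotations: "card rotations = c"
proof -
  have "inj_on (\<lambda>k. rotate k w0) {..<c}" using rotate_inj by (auto simp: inj_on_def)
  then show ?thesis using rotations_eq_image by (simp add: card_image)
qed

lemma finite_rotations: "finite rotations" using rotations_eq_image by simp

lemma length_rotations: "v \<in> rotations \<Longrightarrow> length v = n" unfolding rotations_def necklace_def
  using length_w0 by auto

lemma rotations_ne_Nil: "v \<in> rotations \<Longrightarrow> v \<noteq> []" using length_rotations two_le_n by fastforce

lemma rotate_in_rotations: "v \<in> rotations \<Longrightarrow> rotate k v \<in> rotations"
  unfolding rotations_def necklace_def by (auto simp: rotate_rotate)

lemma rotate1_in_rotations: "v \<in> rotations \<Longrightarrow> rotate1 v \<in> rotations"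
  using rotate_in_rotations[of v 1] by simp

lemma rotate_c_rotations: "v \<in> rotations \<Longrightarrow> rotate c v = v"
proof -
  assume "v \<in> rotations"
  then obtain a where v: "v = rotate a w0" unfolding rotations_def necklace_def by auto
  have "rotate c v = rotate (c + a) w0" by (simp add: v rotate_rotate)
  also have "\<dots> = rotate a (rotate c w0)" by (simp add: rotate_rotate add.commute)
  also have "\<dots> = v" using rotate_c v by simp
  finally show "rotate c v = v" .
qed

definition rank :: "bool list \<Rightarrow> nat" where
  "rank v = card {u \<in> rotations. alt_less u v}"

lemma rank_less: assumes "u \<in> rotations" "v \<in> rotations" "alt_less u v" shows "rank u < rank v"
proof -
  have "{x \<in> rotations. alt_less x u} \<subset> {x \<in> rotations. alt_less x v}"
    using assms alt_less_trans alt_less_irrefl by blast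
  then show ?thesis unfolding rank_def using finite_rotations by (intro psubset_card_mono) auto
qed

lemma rank_less_iff:
  assumes "u \<in> rotations" "v \<in> rotations" shows "rank u < rank v \<longleftrightarrow> alt_less u v"
proof
  assume less: "rank u < rank v"
  show "alt_less u v"
  proof (rule ccontr)
    assume nt: "\<not> alt_less u v"
    have "u \<noteq> v" using less by auto
    then have "alt_less v u" using alt_less_linear[of u v] nt length_rotations assms by auto
    then show False using rank_less[OF assms(2,1)] less by simp
  qed
qed (rule rank_less[OF assms])

lemma inj_on_rank: "inj_on rank rotations"
proof (rule inj_onI)
  fix u v assume uv: "u \<in> rotations" "v \<in> rotations" "rank u = rank v"
  show "u = v"
  proof (rule ccontr)
    assume "u \<noteq> v"
    then have "alt_less u v \<or> alt_less v u" using alt_less_linear length_rotations uv by auto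
    then show False using rank_less uv by fastforce
  qed
qed

lemma rank_less_c: assumes "v \<in> rotations" shows "rank v < c"
proof -
  have "{u \<in> rotations. alt_less u v} \<subseteq> rotations - {v}" using alt_less_irrefl by auto
  then have "rank v \<le> card (rotations - {v})" unfolding rank_def using finite_rotations by (intro card_mono) auto
  also have "\<dots> = c - 1" using assms card_rotations finite_rotations by simp
  finally show ?thesis using c_pos by simp
qed

lemma rank_image: "rank ` rotations = {..<c}"
proof -
  have "rank ` rotations \<subseteq> {..<c}" using rank_less_c by auto
  moreover have "card (rank ` rotations) = card {..<c}" using card_image[OF inj_on_rank] card_rotations by simp
  ultimately show ?thesis by (intro card_subset_eq) auto
qed

text \<open>The points are numbered by the rank of their itinerary in the alternating order, the \<open>m\<close>
  points with the same itinerary \<open>v\<close> being distinguished by a level \<open>t < m\<close>. The permutation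
  \<open>sigma\<close> rotates the itinerary and keeps the level on the increasing part but reverses it on
  the decreasing part.\<close>

definition encode :: "bool list \<Rightarrow> nat \<Rightarrow> nat" where
  "encode v t = m * rank v + t + 1"

lemma encode_in: assumes "v \<in> rotations" "t < m" shows "encode v t \<in> {1..n}"
proof -
  have "m * rank v + m \<le> m * c"
  proof -
    have "m * rank v + m = m * (rank v + 1)" by simp
    also have "\<dots> \<le> m * c" using rank_less_c[OF assms(1)] by (intro mult_le_mono2) simp
    finally show ?thesis .
  qed
  then show ?thesis unfolding encode_def using assms n_eq by auto
qed

lemma encode_less_iff: assumes "v \<in> rotations" "v' \<in> rotations" "t < m" "t' < m"
  shows "encode v t < encode v' t' \<longleftrightarrow> (alt_less v v' \<or> (v = v' \<and> t < t'))"
proof -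
  have "encode v t < encode v' t' \<longleftrightarrow> (rank v < rank v' \<or> (rank v = rank v' \<and> t < t'))"
    unfolding encode_def using mult_add_less_mult_add_iff[OF assms(3,4)] by simp
  also have "\<dots> \<longleftrightarrow> (alt_less v v' \<or> (v = v' \<and> t < t'))"
    using rank_less_iff[OF assms(1,2)] inj_on_rank assms(1,2) by (auto dest: inj_onD)
  finally show ?thesis .
qed

lemma encode_inj: assumes "v \<in> rotations" "v' \<in> rotations" "t < m" "t' < m" "encode v t = encode v' t'"
  shows "v = v' \<and> t = t'"
proof -
  have "rank v = rank v' \<and> t = t'" using mult_add_eq_mult_add_imp[OF assms(3,4)] assms(5) unfolding encode_def by simp
  then show ?thesis using inj_on_rank assms(1,2) by (auto dest: inj_onD)
qed

lemma encode_surj: assumes "x \<in> {1..n}" shows "\<exists>v\<in>rotations. \<exists>t<m. x = encode v t"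
proof -
  let ?q = "(x - 1) div m" and ?t = "(x - 1) mod m"
  have "x - 1 < m * c" using assms n_eq by auto
  then have "?q < c" using m_pos by (simp add: less_mult_imp_div_less mult.commute)
  then obtain v where v: "v \<in> rotations" "rank v = ?q" using rank_image by (metis imageE lessThan_iff)
  have "x = m * ?q + ?t + 1" using assms by simp
  then have "x = encode v ?t" unfolding encode_def using v by simp
  moreover have "?t < m" using m_pos by simp
  ultimately show ?thesis using v by blast
qed

definition decode :: "nat \<Rightarrow> bool list \<times> nat" where
  "decode x = (SOME p. fst p \<in> rotations \<and> snd p < m \<and> x = encode (fst p) (snd p))"

lemma decode_encode: assumes "v \<in> rotations" "t < m" shows "decode (encode v t) = (v, t)"
proof -
  have ex: "\<exists>p. fst p \<in> rotations \<and> snd p < m \<and> encode v t = encode (fst p) (snd p)"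
    using assms by (intro exI[of _ "(v,t)"]) simp
  let ?p = "decode (encode v t)"
  have "fst ?p \<in> rotations \<and> snd ?p < m \<and> encode v t = encode (fst ?p) (snd ?p)"
    unfolding decode_def using someI_ex[OF ex] .
  then have "v = fst ?p \<and> t = snd ?p" using encode_inj[of v "fst ?p" t "snd ?p"] assms by blast
  then show ?thesis by (metis prod.collapse)
qed

definition flip :: "bool list \<Rightarrow> nat \<Rightarrow> nat" where
  "flip v t = (if hd v then t else m - 1 - t)"

lemma flip_less: "t < m \<Longrightarrow> flip v t < m" unfolding flip_def using m_pos by auto

definition sigma :: "nat \<Rightarrow> nat" where
  "sigma x = (if x \<in> {1..n}
     then encode (rotate1 (fst (decode x))) (flip (fst (decode x)) (snd (decode x))) else x)"

lemma sigma_encode: assumes "v \<in> rotations" "t < m" shows "sigma (encode v t) = encode (rotate1 v) (flip v t)"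
  using encode_in[OF assms] decode_encode[OF assms] unfolding sigma_def by simp

lemma sigma_permutes: "sigma permutes {1..n}"
proof (rule inj_imp_permutes)
  show "inj_on sigma {1..n}"
  proof (rule inj_onI)
    fix x y assume x: "x \<in> {1..n}" and y: "y \<in> {1..n}" and e: "sigma x = sigma y"
    obtain v t where vt: "v \<in> rotations" "t < m" "x = encode v t" using encode_surj[OF x] by blast
    obtain v' t' where vt': "v' \<in> rotations" "t' < m" "y = encode v' t'" using encode_surj[OF y] by blast
    have "encode (rotate1 v) (flip v t) = encode (rotate1 v') (flip v' t')"
      using e vt vt' sigma_encode by simp
    then have "rotate1 v = rotate1 v' \<and> flip v t = flip v' t'"
      using encode_inj rotate1_in_rotations flip_less vt vt' by blast
    then have "v = v'" "flip v t = flip v t'" using inj_rotate1 by (auto dest: injD)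
    then have "t = t'" using vt vt' unfolding flip_def by (auto split: if_splits)
    then show "x = y" using vt vt' \<open>v = v'\<close> by simp
  qed
  show "sigma x \<in> {1..n}" if xin: "x \<in> {1..n}" for x
  proof -
    obtain v t where vt: "v \<in> rotations" "t < m" "x = encode v t" using encode_surj[OF xin] by blast
    then show ?thesis using sigma_encode encode_in rotate1_in_rotations flip_less by simp
  qed
  show "sigma x = x" if xn: "x \<notin> {1..n}" for x unfolding sigma_def by (rule if_not_P[OF xn])
qed simp

fun level :: "bool list \<Rightarrow> nat \<Rightarrow> nat \<Rightarrow> nat" where
  "level v t 0 = t"
| "level v t (Suc k) = flip (rotate k v) (level v t k)"

lemma level_less: "t < m \<Longrightarrow> level v t k < m"
  by (induction k) (auto simp: flip_less)

lemma funpow_sigma_encode: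
  assumes "v \<in> rotations" "t < m"
  shows "(sigma ^^ k) (encode v t) = encode (rotate k v) (level v t k)"
proof (induction k)
  case (Suc k)
  have "(sigma^^Suc k) (encode v t) = sigma (encode (rotate k v) (level v t k))" using Suc by simp
  also have "\<dots> = encode (rotate1 (rotate k v)) (flip (rotate k v) (level v t k))"
    using sigma_encode rotate_in_rotations[OF assms(1)] level_less[OF assms(2)] by simp
  finally show ?case by simp
qed simp

definition heads :: nat where
  "heads = card {v \<in> rotations. hd v}"

lemma hd_conv_nth_rotations: "v \<in> rotations \<Longrightarrow> hd v = v ! 0"
  using rotations_ne_Nil by (simp add: hd_conv_nth)

lemma alt_less_if_hd: assumes "u \<in> rotations" "v \<in> rotations" "hd u" "\<not> hd v" shows "alt_less u v"
  unfolding alt_less_def using assms length_rotations two_le_n hd_conv_nth_rotations by (intro conjI exI[of _ 0]) auto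

lemma rank_less_heads_iff: assumes v: "v \<in> rotations" shows "rank v < heads \<longleftrightarrow> hd v"
proof
  assume "hd v"
  let ?A = "{u \<in> rotations. hd u}"
  have "{u \<in> rotations. alt_less u v} \<subseteq> ?A - {v}"
    using alt_less_if_hd[OF v _ \<open>hd v\<close>] alt_less_asym alt_less_irrefl by blast
  then have "rank v \<le> card (?A - {v})" unfolding rank_def using finite_rotations by (intro card_mono) auto
  also have "\<dots> < card ?A" using v \<open>hd v\<close> finite_rotations by (intro card_Diff1_less) auto
  finally show "rank v < heads" unfolding heads_def .
next
  assume "rank v < heads"
  show "hd v"
  proof (rule ccontr)
    assume "\<not> hd v"
    then have "{u \<in> rotations. hd u} \<subseteq> {u \<in> rotations. alt_less u v}"
      using alt_less_if_hd[OF _ v] by blast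
    then have "heads \<le> rank v" unfolding heads_def rank_def using finite_rotations by (intro card_mono) auto
    then show False using \<open>rank v < heads\<close> by simp
  qed
qed

definition turn :: nat where
  "turn = m * heads"

lemma heads_le_c: "heads \<le> c" unfolding heads_def
  using card_rotations finite_rotations card_mono[of rotations "{v \<in> rotations. hd v}"] by auto

lemma turn_le_n: "turn \<le> n" unfolding turn_def using heads_le_c n_eq by simp

lemma encode_le_turn_iff: assumes "v \<in> rotations" "t < m" shows "encode v t \<le> turn \<longleftrightarrow> hd v"
proof -
  have "encode v t \<le> turn \<longleftrightarrow> m * rank v + t < m * heads + 0"
    unfolding encode_def turn_def by (simp add: Suc_le_eq)
  also have "\<dots> \<longleftrightarrow> rank v < heads" using mult_add_less_mult_add_iff[OF assms(2) m_pos] by simp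
  also have "\<dots> \<longleftrightarrow> hd v" using rank_less_heads_iff[OF assms(1)] .
  finally show ?thesis .
qed

lemma alt_less_rotate1: assumes u: "u \<in> rotations" and v: "v \<in> rotations" and hh: "hd u = hd v" and t: "alt_less u v"
  shows "if hd u then alt_less (rotate1 u) (rotate1 v) else alt_less (rotate1 v) (rotate1 u)"
proof -
  obtain k where k: "k < n" "\<forall>j<k. u!j = v!j" "u!k \<noteq> v!k" "u!k = even (false_count ((!) u) k)"
    using t length_rotations u unfolding alt_less_def by auto
  have "k \<noteq> 0"
  proof
    assume "k = 0" then show False using k(3) hh hd_conv_nth_rotations[OF u] hd_conv_nth_rotations[OF v] by simp
  qed
  then obtain k' where k': "k = Suc k'" by (cases k) auto
  have r: "rotate1 x ! j = x ! Suc j" if "x \<in> rotations" "j < k'" for x j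
    using that k k' length_rotations[OF that(1)] by (simp add: nth_rotate1)
  have rk': "rotate1 x ! k' = x ! k" if "x \<in> rotations" for x
    using that k k' length_rotations[OF that(1)] by (simp add: nth_rotate1)
  have pre: "\<forall>j<k'. rotate1 u ! j = rotate1 v ! j" using r u v k(2) k' by auto
  have cu: "false_count ((!) u) k = (if u!0 then 0 else 1) + false_count ((!) (rotate1 u)) k'"
    using false_count_Suc_shift[of "(!) u" k'] k' r[OF u]
      by (simp add: false_count_cong[of k' "(!) (rotate1 u)" "\<lambda>j. u ! Suc j"])
  have cuv: "false_count ((!) (rotate1 u)) k' = false_count ((!) (rotate1 v)) k'" using pre by (intro false_count_cong) auto
  have lr: "length (rotate1 u) = length (rotate1 v)" "k' < length (rotate1 u)" using length_rotations u v k k' by auto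
  show ?thesis
  proof (cases "hd u")
    case True
    then have "u!0" using hd_conv_nth_rotations u by simp
    then have "rotate1 u ! k' = even (false_count ((!) (rotate1 u)) k')" using k(4) cu rk'[OF u] by simp
    moreover have "rotate1 u ! k' \<noteq> rotate1 v ! k'" using rk' u v k(3) by simp
    ultimately show ?thesis using True pre lr unfolding alt_less_def by auto
  next
    case False
    then have "\<not> u!0" using hd_conv_nth_rotations u by simp
    then have "rotate1 v ! k' = even (false_count ((!) (rotate1 v)) k')" using k(3,4) cu cuv rk'[OF u] rk'[OF v] by auto
    moreover have "rotate1 u ! k' \<noteq> rotate1 v ! k'" using rk' u v k(3) by simp
    ultimately show ?thesis using False pre lr unfolding alt_less_def by (auto intro!: exI[of _ k'])
  qed
qed

definition least_rotation :: "bool list" where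
  "least_rotation = inv_into rotations rank 0"

lemma least_rotation_in_rotations: "least_rotation \<in> rotations" and rank_least_rotation: "rank least_rotation = 0"
proof -
  have "0 \<in> rank ` rotations" using rank_image c_pos by simp
  then show "least_rotation \<in> rotations" "rank least_rotation = 0"
    unfolding least_rotation_def by (auto intro: inv_into_into f_inv_into_f)
qed

lemma encode_least_rotation: "encode least_rotation 0 = 1" unfolding encode_def using rank_least_rotation by simp

lemma sigma_increasing:
  assumes "1 \<le> a" "a < b" "b \<le> turn" shows "sigma a < sigma b"
proof -
  have an: "a \<in> {1..n}" "b \<in> {1..n}" using assms turn_le_n by auto
  obtain va ta where a: "va \<in> rotations" "ta < m" "a = encode va ta" using encode_surj[OF an(1)] by blast
  obtain vb tb where b: "vb \<in> rotations" "tb < m" "b = encode vb tb" using encode_surj[OF an(2)] by blast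
  have ha: "hd va" using encode_le_turn_iff[OF a(1,2)] a(3) assms by simp
  have hb: "hd vb" using encode_le_turn_iff[OF b(1,2)] b(3) assms by simp
  have "alt_less va vb \<or> (va = vb \<and> ta < tb)" using encode_less_iff[OF a(1) b(1) a(2) b(2)] a b assms by simp
  then show ?thesis
  proof
    assume t: "alt_less va vb"
    have "alt_less (rotate1 va) (rotate1 vb)" using alt_less_rotate1[OF a(1) b(1) _ t] ha hb by simp
    then show ?thesis
      using a b sigma_encode encode_less_iff[OF rotate1_in_rotations[OF a(1)]
          rotate1_in_rotations[OF b(1)] flip_less[OF a(2)] flip_less[OF b(2)]] by simp
  next
    assume t: "va = vb \<and> ta < tb"
    then show ?thesis using a b sigma_encode ha by (simp add: flip_def encode_def)
  qed
qed

lemma sigma_decreasing: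
  assumes "turn + 1 \<le> a" "a < b" "b \<le> n" shows "sigma b < sigma a"
proof -
  have an: "a \<in> {1..n}" "b \<in> {1..n}" using assms by auto
  obtain va ta where a: "va \<in> rotations" "ta < m" "a = encode va ta" using encode_surj[OF an(1)] by blast
  obtain vb tb where b: "vb \<in> rotations" "tb < m" "b = encode vb tb" using encode_surj[OF an(2)] by blast
  have ha: "\<not> hd va" using encode_le_turn_iff[OF a(1,2)] a(3) assms by simp
  have hb: "\<not> hd vb" using encode_le_turn_iff[OF b(1,2)] b(3) assms by simp
  have "alt_less va vb \<or> (va = vb \<and> ta < tb)" using encode_less_iff[OF a(1) b(1) a(2) b(2)] a b assms by simp
  then show ?thesis
  proof
    assume t: "alt_less va vb"
    have "alt_less (rotate1 vb) (rotate1 va)" using alt_less_rotate1[OF a(1) b(1) _ t] ha hb by simp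
    then show ?thesis
      using a b sigma_encode encode_less_iff[OF rotate1_in_rotations[OF b(1)]
          rotate1_in_rotations[OF a(1)] flip_less[OF b(2)] flip_less[OF a(2)]] by simp
  next
    assume t: "va = vb \<and> ta < tb"
    then have "m - 1 - tb < m - 1 - ta" using b(2) by arith
    then show ?thesis using t a b sigma_encode ha by (simp add: flip_def encode_def)
  qed
qed

lemma level_parity:
  assumes "m = 2" "t < 2"
  shows "level v t k = (t + false_count (\<lambda>j. hd (rotate j v)) k) mod 2"
proof (induction k)
  case 0 show ?case using assms(2) by simp
next
  case (Suc k)
  show ?case
  proof (cases "hd (rotate k v)")
    case True then show ?thesis using Suc by (simp add: flip_def)
  next
    case False
    then have "level v t (Suc k) = m - 1 - level v t k" by (simp add: flip_def)
    also have "\<dots> = 1 - level v t k" using assms(1) by simp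
    finally have "level v t (Suc k) = 1 - level v t k" .
    also have "\<dots> = Suc (t + false_count (\<lambda>j. hd (rotate j v)) k) mod 2" using Suc by presburger
    finally show ?thesis using False by simp
  qed
qed

lemma w0_eq_append: assumes "m = 2" shows "w0 = take c w0 @ take c w0"
proof -
  have ln: "length w0 = 2 * c" using length_w0 n_eq assms by simp
  have "w0 = drop c w0 @ take c w0"
    using rotate_c ln c_pos by (metis rotate_drop_take mod_less lessI mult_2 less_add_same_cancel1)
  then have "take c w0 = take c (drop c w0 @ take c w0)" by simp
  also have "\<dots> = drop c w0" using ln by simp
  finally have "drop c w0 = take c w0" by simp
  then show ?thesis using append_take_drop_id[of c w0] by simp
qed

lemma count_take_c_rotations: assumes "m = 2" "v \<in> rotations"
  shows "count_list (take c v) False = count_list (take c w0) False"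
proof -
  let ?u = "take c w0"
  have lu: "length ?u = c" using length_w0 c_le_n by simp
  obtain a where a: "a < c" "v = rotate a w0" using assms rotations_eq_image by auto
  have "v = rotate a ?u @ rotate a ?u" using a rotate_append_self[of a ?u] lu w0_eq_append[OF assms(1)] by simp
  then have "take c v = rotate a ?u" using lu by simp
  then show ?thesis by (simp add: count_list_rotate)
qed

lemma level_c: assumes "m = 2" "v \<in> rotations" "t < 2" shows "level v t c = 1 - t"
proof -
  have "false_count (\<lambda>j. hd (rotate j v)) c = false_count ((!) v) c"
  proof (rule false_count_cong)
    fix j assume "j < c"
    then show "hd (rotate j v) = v ! j"
      using hd_rotate_conv_nth[OF rotations_ne_Nil[OF assms(2)]] length_rotations[OF assms(2)] c_le_n by simp
  qed
  also have "\<dots> = count_list (take c v) False"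
    using c_le_n length_rotations[OF assms(2)] by (intro false_count_nth) simp
  also have "\<dots> = count_list (take c w0) False" using count_take_c_rotations assms by simp
  finally have "odd (false_count (\<lambda>j. hd (rotate j v)) c)" using odd_falses assms(1) by simp
  then show ?thesis using level_parity[OF assms(1,3)] assms(3) by presburger
qed

lemma necklace_least_rotation: "necklace least_rotation = rotations"
proof -
  obtain a where "least_rotation = rotate a w0"
    using least_rotation_in_rotations unfolding rotations_def necklace_def by auto
  then show ?thesis unfolding rotations_def by (simp add: necklace_rotate)
qed

text \<open>For \<open>m = 2\<close> a full period of \<open>c\<close> steps reverses the level an odd number of times, so
  the two points with the same itinerary lie on the same cycle.\<close>

lemma sigma_cyclic: "\<forall>x\<in>{1..n}. \<exists>k. (sigma^^k) 1 = x"
proof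
  fix x assume x: "x \<in> {1..n}"
  obtain v t where vt: "v \<in> rotations" "t < m" "x = encode v t" using encode_surj[OF x] by blast
  obtain j where j: "v = rotate j least_rotation" using vt(1) necklace_least_rotation unfolding necklace_def by auto
  have pj: "(sigma^^j) 1 = encode v (level least_rotation 0 j)"
    using funpow_sigma_encode[OF least_rotation_in_rotations m_pos, of j] encode_least_rotation j by simp
  have tl: "level least_rotation 0 j < m" using level_less m_pos by simp
  show "\<exists>k. (sigma^^k) 1 = x"
  proof (cases "level least_rotation 0 j = t")
    case True then show ?thesis using pj vt by auto
  next
    case False
    then have m2: "m = 2" using m_cases vt tl by auto
    have "(sigma^^(c + j)) 1 = (sigma^^c) ((sigma^^j) 1)" by (simp add: funpow_add)
    also have "\<dots> = encode (rotate c v) (level v (level least_rotation 0 j) c)"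
      using pj funpow_sigma_encode[OF vt(1) tl] by simp
    also have "\<dots> = encode v (1 - level least_rotation 0 j)"
      using rotate_c_rotations[OF vt(1)] level_c[OF m2 vt(1)] tl m2 by simp
    also have "1 - level least_rotation 0 j = t" using False tl vt(2) m2 by simp
    finally show ?thesis using vt by auto
  qed
qed

lemma unimodal_cycle_sigma: "unimodal_cycle n turn sigma"
  by unfold_locales
    (use two_le_n turn_le_n sigma_permutes sigma_cyclic sigma_increasing sigma_decreasing in auto)

lemma word_sigma: "unimodal_cycle.word n turn sigma = least_rotation"
proof -
  interpret L: unimodal_cycle n turn sigma by (rule unimodal_cycle_sigma)
  have "L.word = map (L.letter 1) [0..<n]" unfolding L.word_def L.itin_def by simp
  also have "\<dots> = map ((!) least_rotation) [0..<n]"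
  proof (rule map_cong[OF refl])
    fix j assume "j \<in> set [0..<n]"
    then have j: "j < n" by simp
    have "L.letter 1 j = (encode (rotate j least_rotation) (level least_rotation 0 j) \<le> turn)"
      unfolding L.letter_def
        using funpow_sigma_encode[OF least_rotation_in_rotations m_pos, of j] encode_least_rotation by simp
    also have "\<dots> = hd (rotate j least_rotation)"
      using encode_le_turn_iff[OF rotate_in_rotations[OF least_rotation_in_rotations] level_less[OF m_pos]] by simp
    also have "\<dots> = least_rotation ! j"
      using hd_rotate_conv_nth[OF rotations_ne_Nil[OF least_rotation_in_rotations]]
        length_rotations[OF least_rotation_in_rotations] j by simp
    finally show "L.letter 1 j = least_rotation ! j" .
  qed
  also have "\<dots> = least_rotation" using length_rotations[OF least_rotation_in_rotations] map_nth by metis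
  finally show ?thesis .
qed

lemma heads_eq_count: "heads = count_list (take c w0) True"
proof -
  have "{v \<in> rotations. hd v} = (\<lambda>k. rotate k w0) ` {k. k < c \<and> w0 ! k}"
  proof -
    have ne: "w0 \<noteq> []" using length_w0 two_le_n by auto
    have hk: "hd (rotate k w0) = w0 ! k" if "k < c" for k
    proof -
      have "k mod length w0 = k" using length_w0 that c_le_n by simp
      then show ?thesis using hd_rotate_conv_nth[OF ne, of k] by simp
    qed
    show ?thesis
    proof
      show "{v \<in> rotations. hd v} \<subseteq> (\<lambda>k. rotate k w0) ` {k. k < c \<and> w0 ! k}"
        using rotations_eq_image hk by auto
      show "(\<lambda>k. rotate k w0) ` {k. k < c \<and> w0 ! k} \<subseteq> {v \<in> rotations. hd v}"
        using rotations_eq_image hk by auto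
    qed
  qed
  moreover have "inj_on (\<lambda>k. rotate k w0) {k. k < c \<and> w0 ! k}" using rotate_inj by (auto simp: inj_on_def)
  ultimately have "heads = card {k. k < c \<and> w0 ! k}" unfolding heads_def by (simp add: card_image)
  also have "{k. k < c \<and> w0 ! k} = {k. k < length (take c w0) \<and> take c w0 ! k = True}"
    using length_w0 c_le_n by auto
  also have "card \<dots> = count_list (take c w0) True" by (simp add: count_list_conv_card)
  finally show ?thesis .
qed

theorem exists_unimodal_cycle:
  "\<exists>p. unimodal_cycle n (m * count_list (take c w0) True) p \<and>
     necklace (unimodal_cycle.word n (m * count_list (take c w0) True) p) = necklace w0"
proof -
  have "turn = m * count_list (take c w0) True" unfolding turn_def using heads_eq_count by simp
  moreover have "necklace (unimodal_cycle.word n turn sigma) = necklace w0"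
    using word_sigma necklace_least_rotation rotations_def by simp
  ultimately show ?thesis using unimodal_cycle_sigma by metis
qed

end

section \<open>Counting the permutations\<close>

lemma unimodal_monotone_around_max:
  assumes perm: "p permutes {1..n}" and "unimodal n p" and k: "k \<in> {1..n}" "p k = n"
  shows "\<And>a b. 1 \<le> a \<Longrightarrow> a < b \<Longrightarrow> b \<le> k \<Longrightarrow> p a < p b"
    and "\<And>a b. k \<le> a \<Longrightarrow> a < b \<Longrightarrow> b \<le> n \<Longrightarrow> p b < p a"
proof -
  obtain e where inc: "\<forall>a b. 1 \<le> a \<and> a < b \<and> b \<le> e \<longrightarrow> p a < p b"
    and dec: "\<forall>a b. e + 1 \<le> a \<and> a < b \<and> b \<le> n \<longrightarrow> p a > p b"
    using \<open>unimodal n p\<close> unfolding unimodal_def by blast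
  have below_max: "p x < n" if "x \<in> {1..n}" "x \<noteq> k" for x
  proof -
    have "p x \<in> {1..n}" using permutes_in_image[OF perm] that(1) by simp
    moreover have "p x \<noteq> p k" using permutes_inj[OF perm] that(2) by (auto dest: injD)
    ultimately show ?thesis using k(2) by simp
  qed
  show "p a < p b" if "1 \<le> a" "a < b" "b \<le> k" for a b
  proof (cases "b \<le> e")
    case False
    have "b = k"
    proof (rule ccontr)
      assume "b \<noteq> k"
      then have "p k < p b" using dec False that k(1) by simp
      then show False using below_max[of b] \<open>b \<noteq> k\<close> that k by simp
    qed
    then show ?thesis using below_max[of a] that k by simp
  qed (use inc that in blast)
  show "p b < p a" if "k \<le> a" "a < b" "b \<le> n" for a b
  proof (cases "e + 1 \<le> a")
    case False
    have "a = k"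
    proof (rule ccontr)
      assume "a \<noteq> k"
      then have "p k < p a" using inc False that k(1) by simp
      then show False using below_max[of a] \<open>a \<noteq> k\<close> that k by simp
    qed
    then show ?thesis using below_max[of b] that k by simp
  qed (use dec that in blast)
qed

lemma (in unimodal_cycle) max_position:
  assumes "1 \<le> e" "e < n" and x: "x \<in> {1..n}" "f x = n"
  shows "x = e \<or> x = e + 1"
proof (rule ccontr)
  assume "\<not> (x = e \<or> x = e + 1)"
  then consider "x < e" | "e + 1 < x" by linarith
  then show False
  proof cases
    case 1
    moreover have "e \<in> {1..n}" using assms by auto
    ultimately show False using increasing[of x e] f_in[of e] x by fastforce
  next
    case 2
    then have "x - 1 \<in> {1..n}" "e + 1 \<le> x - 1" using x by auto
    then show False using decreasing[of "x - 1" x] f_in[of "x - 1"] x by fastforce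
  qed
qed

lemma unimodal_cycle_iff:
  assumes "2 \<le> n" "1 \<le> i" "i \<le> n - 1"
  shows "unimodal_cycle n i p \<longleftrightarrow> cyclic_perm n p \<and> unimodal n p \<and> (p i = n \<or> p (i + 1) = n)"
proof
  assume "unimodal_cycle n i p"
  then interpret unimodal_cycle n i p .
  have "cyclic_perm n p" unfolding cyclic_perm_def using permutes cyclic by simp
  moreover have "unimodal n p" unfolding unimodal_def using e_le_n increasing decreasing by auto
  moreover have "x = i \<or> x = i + 1" if "x \<in> {1..n}" "p x = n" for x
    using max_position assms that by simp
  moreover have "n \<in> p ` {1..n}" using permutes_image[OF permutes] assms(1) by simp
  ultimately show "cyclic_perm n p \<and> unimodal n p \<and> (p i = n \<or> p (i + 1) = n)" by blast
next
  assume p: "cyclic_perm n p \<and> unimodal n p \<and> (p i = n \<or> p (i + 1) = n)"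
  then have perm: "p permutes {1..n}" and cyclic: "\<forall>x\<in>{1..n}. \<exists>k. (p ^^ k) 1 = x"
    unfolding cyclic_perm_def by auto
  have "(\<forall>a b. 1 \<le> a \<longrightarrow> a < b \<longrightarrow> b \<le> i \<longrightarrow> p a < p b) \<and>
        (\<forall>a b. i + 1 \<le> a \<longrightarrow> a < b \<longrightarrow> b \<le> n \<longrightarrow> p b < p a)"
  proof (cases "p i = n")
    case True
    then show ?thesis using unimodal_monotone_around_max[OF perm _ _ True] p assms by auto
  next
    case False
    then have max: "p (i + 1) = n" using p by simp
    then show ?thesis using unimodal_monotone_around_max[OF perm _ _ max] p assms by auto
  qed
  then show "unimodal_cycle n i p"
    by unfold_locales (use assms perm cyclic in auto)
qed

lemma Lambda_add_Lambda_Suc: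
  assumes "2 \<le> n" "1 \<le> i" "i \<le> n - 1"
  shows "Lambda n i + Lambda n (i + 1) = card {p. unimodal_cycle n i p}"
proof -
  let ?A = "{p. cyclic_perm n p \<and> unimodal n p \<and> p i = n}"
  let ?B = "{p. cyclic_perm n p \<and> unimodal n p \<and> p (i + 1) = n}"
  have fin: "finite {p. p permutes {1..n}}" by (rule finite_permutations) simp
  have "finite ?A" by (rule finite_subset[OF _ fin]) (auto simp: cyclic_perm_def)
  moreover have "finite ?B" by (rule finite_subset[OF _ fin]) (auto simp: cyclic_perm_def)
  moreover have "?A \<inter> ?B = {}"
  proof (rule equals0I)
    fix p assume "p \<in> ?A \<inter> ?B"
    then have "p permutes {1..n}" "p i = p (i + 1)" unfolding cyclic_perm_def by auto
    then show False using permutes_inj by (metis injD n_not_Suc_n Suc_eq_plus1)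
  qed
  ultimately have "card ?A + card ?B = card (?A \<union> ?B)" by (simp add: card_Un_disjoint)
  also have "?A \<union> ?B = {p. unimodal_cycle n i p}" using unimodal_cycle_iff[OF assms] by auto
  finally show ?thesis unfolding Lambda_def .
qed

definition primitive_words :: "nat \<Rightarrow> nat \<Rightarrow> bool list set" where
  "primitive_words n i = {w. length w = n \<and> count_list w True = i \<and> primitive_word w}"

definition square_necklaces :: "nat \<Rightarrow> nat \<Rightarrow> bool list set set" where
  "square_necklaces n i = (\<lambda>u. necklace (u @ u)) ` primitive_words (n div 2) (i div 2)"

definition itin_necklaces :: "nat \<Rightarrow> nat \<Rightarrow> bool list set set" where
  "itin_necklaces n i = necklace ` primitive_words n i \<union>
     (if even n \<and> (n + i) mod 4 = 2 then square_necklaces n i else {})"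

lemma necklace_word_in_itin_necklaces:
  assumes "unimodal_cycle n i p"
  shows "necklace (unimodal_cycle.word n i p) \<in> itin_necklaces n i"
proof -
  interpret unimodal_cycle n i p by (rule assms)
  from word_primitive_or_square show ?thesis
  proof
    assume "primitive_word word"
    then have "word \<in> primitive_words n i" unfolding primitive_words_def using count_word_True by simp
    then show ?thesis unfolding itin_necklaces_def by auto
  next
    assume "\<exists>u. word = u @ u \<and> primitive_word u \<and> odd (count_list u False) \<and> 2 * length u = n"
    then obtain u where u: "word = u @ u" "primitive_word u" "odd (count_list u False)" "2 * length u = n"
      by blast
    have trues: "2 * count_list u True = i" using count_word_True u(1) by simp
    have "count_list u True + count_list u False = length u" by (rule count_list_True_False)
    then have "even n \<and> (n + i) mod 4 = 2" using u(3,4) trues by presburger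
    moreover have "u \<in> primitive_words (n div 2) (i div 2)"
      unfolding primitive_words_def using u(2,4) trues by auto
    ultimately show ?thesis unfolding itin_necklaces_def square_necklaces_def using u(1) by auto
  qed
qed

lemma unimodal_cycle_with_primitive_necklace:
  assumes "2 \<le> n" and w: "w \<in> primitive_words n i"
  shows "\<exists>p. unimodal_cycle n i p \<and> necklace (unimodal_cycle.word n i p) = necklace w"
proof -
  have w: "length w = n" "count_list w True = i" "primitive_word w"
    using w unfolding primitive_words_def by auto
  have "admissible_word n n 1 w"
  proof unfold_locales
    show "a = b" if "a < n" "b < n" "rotate a w = rotate b w" for a b
      using primitive_word_rotate_inj[OF w(3)] that w(1) by simp
  qed (use w(1) assms(1) in simp_all)
  from admissible_word.exists_unimodal_cycle[OF this] obtain p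
    where "unimodal_cycle n (1 * count_list (take n w) True) p"
      "necklace (unimodal_cycle.word n (1 * count_list (take n w) True) p) = necklace w"
    by blast
  then show ?thesis using w by auto
qed

lemma unimodal_cycle_with_square_necklace:
  assumes "2 \<le> n" "even n" "(n + i) mod 4 = 2" and u: "u \<in> primitive_words (n div 2) (i div 2)"
  shows "\<exists>p. unimodal_cycle n i p \<and> necklace (unimodal_cycle.word n i p) = necklace (u @ u)"
proof -
  obtain h where h: "n = 2 * h" using assms(2) by blast
  have u: "length u = h" "count_list u True = i div 2" "primitive_word u"
    using u h unfolding primitive_words_def by auto
  have "even i" using assms(3) h by presburger
  define T F where "T = count_list u True" and "F = count_list u False"
  have "T + F = h" "2 * T = i" unfolding T_def F_def
    using count_list_True_False[of u] u(1,2) \<open>even i\<close> by auto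
  then have odd: "odd F" using assms(3) h by presburger
  have "admissible_word n h 2 (u @ u)"
  proof unfold_locales
    show "length (u @ u) = n" "n = 2 * h" using u(1) h by auto
    show "rotate h (u @ u) = u @ u" using u(1) rotate_append[of u u] by simp
    show "a = b" if "a < h" "b < h" "rotate a (u @ u) = rotate b (u @ u)" for a b
      using that rotate_append_self[of a u] rotate_append_self[of b u] u(1)
        primitive_word_rotate_inj[OF u(3), of a b] by simp
    show "odd (count_list (take h (u @ u)) False)" using odd u(1) unfolding F_def by simp
  qed (use assms(1) in simp_all)
  from admissible_word.exists_unimodal_cycle[OF this] obtain p
    where "unimodal_cycle n (2 * count_list (take h (u @ u)) True) p"
      "necklace (unimodal_cycle.word n (2 * count_list (take h (u @ u)) True) p) = necklace (u @ u)"
    by blast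
  moreover have "2 * count_list (take h (u @ u)) True = i"
    using \<open>2 * T = i\<close> u(1) unfolding T_def by simp
  ultimately show ?thesis by auto
qed

lemma exists_unimodal_cycle_with_necklace:
  assumes "2 \<le> n" and "N \<in> itin_necklaces n i"
  shows "\<exists>p. unimodal_cycle n i p \<and> necklace (unimodal_cycle.word n i p) = N"
  using assms unimodal_cycle_with_primitive_necklace unimodal_cycle_with_square_necklace
  unfolding itin_necklaces_def square_necklaces_def by (auto split: if_splits)

lemma card_unimodal_cycle:
  assumes "2 \<le> n"
  shows "card {p. unimodal_cycle n i p} = card (itin_necklaces n i)"
proof (rule bij_betw_same_card)
  show "bij_betw (\<lambda>p. necklace (unimodal_cycle.word n i p)) {p. unimodal_cycle n i p} (itin_necklaces n i)"
    unfolding bij_betw_def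
  proof
    show "inj_on (\<lambda>p. necklace (unimodal_cycle.word n i p)) {p. unimodal_cycle n i p}"
      using unimodal_cycle_eq_if_same_necklace by (intro inj_onI) blast
    show "(\<lambda>p. necklace (unimodal_cycle.word n i p)) ` {p. unimodal_cycle n i p} = itin_necklaces n i"
      using necklace_word_in_itin_necklaces exists_unimodal_cycle_with_necklace[OF assms] by blast
  qed
qed

lemma finite_primitive_words: "finite (primitive_words n i)"
  using finite_lists_length_eq[of "UNIV :: bool set" n]
  by (rule finite_subset[rotated]) (auto simp: primitive_words_def)

lemma card_square_necklaces:
  assumes "2 \<le> n"
  shows "card (square_necklaces n i) = L2 (n div 2) (i div 2)"
proof -
  have nonempty: "u \<noteq> []" if "u \<in> primitive_words (n div 2) (i div 2)" for u
    using that assms unfolding primitive_words_def by auto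
  have inj: "inj (\<lambda>v::bool list. v @ v)"
  proof (rule injI)
    fix x y :: "bool list" assume xy: "x @ x = y @ y"
    then have "length (x @ x) = length (y @ y)" by (rule arg_cong)
    then have "length x = length y" by simp
    with xy show "x = y" using append_eq_append_conv[of x y x y] by blast
  qed
  have "inj_on (\<lambda>M. (\<lambda>v::bool list. v @ v) ` M) X" for X
    by (rule inj_onI) (simp add: inj_image_eq_iff[OF inj])
  moreover have "square_necklaces n i =
      (\<lambda>M. (\<lambda>v. v @ v) ` M) ` (necklace ` primitive_words (n div 2) (i div 2))"
    unfolding square_necklaces_def using necklace_append_self nonempty by (auto simp: image_image)
  ultimately have "card (square_necklaces n i) = card (necklace ` primitive_words (n div 2) (i div 2))"
    by (simp add: card_image)
  then show ?thesis unfolding L2_def primitive_words_def by simp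
qed

lemma primitive_necklaces_disjoint_square_necklaces:
  assumes "2 \<le> n"
  shows "necklace ` primitive_words n i \<inter> square_necklaces n i = {}"
proof -
  have "\<not> primitive_word w" if "u \<in> primitive_words (n div 2) (i div 2)" "necklace w = necklace (u @ u)" for u w
  proof (rule not_primitive_word_in_necklace_append_self)
    show "u \<noteq> []" using that(1) assms unfolding primitive_words_def by auto
    have "w \<in> necklace w" unfolding necklace_def by (metis (mono_tags) mem_Collect_eq rotate0 id_apply)
    then show "w \<in> necklace (u @ u)" using that(2) by simp
  qed
  then show ?thesis unfolding square_necklaces_def primitive_words_def by blast
qed

lemma card_itin_necklaces:
  assumes "2 \<le> n"
  shows "card (itin_necklaces n i) =
    (if even n \<and> (n + i) mod 4 = 2 then L2 n i + L2 (n div 2) (i div 2) else L2 n i)"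
proof -
  have "card (necklace ` primitive_words n i) = L2 n i" unfolding L2_def primitive_words_def by simp
  moreover have "finite (square_necklaces n i)"
    unfolding square_necklaces_def using finite_primitive_words by simp
  ultimately show ?thesis unfolding itin_necklaces_def
    using card_Un_disjoint[OF _ _ primitive_necklaces_disjoint_square_necklaces[OF assms]]
      card_square_necklaces[OF assms] finite_primitive_words by simp
qed

theorem lemma4p2:
  fixes n i :: nat
  assumes "n \<ge> 1" and "1 \<le> i" and "i \<le> n - 1"
  shows "Lambda n i + Lambda n (i + 1) =
    (if even n \<and> (n + i) mod 4 = 2 then L2 n i + L2 (n div 2) (i div 2) else L2 n i)"
proof -
  have n: "2 \<le> n" using assms by simp
  have "Lambda n i + Lambda n (i + 1) = card {p. unimodal_cycle n i p}"
    by (rule Lambda_add_Lambda_Suc[OF n assms(2,3)])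
  also have "\<dots> = card (itin_necklaces n i)" by (rule card_unimodal_cycle[OF n])
  finally show ?thesis using card_itin_necklaces[OF n] by simp
qed

end
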